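(* Let $A_0\to A_1\to\cdots$ be an $\omega$-chain in $\mathsf{SquaMS}$ with connecting morphisms $a_{k,\ell}$, and let $(C,(c_k)_k)$ be its colimit in $\mathsf{SquaMS}$. Then $(M\otimes C,(M\otimes c_k)_k)$ is the colimit of the chain $M\otimes A_0\to M\otimes A_1\to\cdots$ with connecting morphisms $M\otimes a_{k,\ell}$.
   Context: Let $M_0=\{(r,s)\in[0,1]^2: r\in\{0,1\}\text{ or } s\in\{0,1\}\}$. A square metric space is a pair $(X,S_X)$ with $X$ a metric space with all distances at most $2$ and $S_X\colon M_0\to X$ injective such that (sq1) for $i\in\{0,1\}$, $r,s\in[0,1]$: $d_X(S_X(i,r),S_X(i,s))=|s-r|$ and $d_X(S_X(r,i),S_X(s,i))=|s-r|$; (sq2) $d_X(S_X(r,s),S_X(t,u))\ge|r-t|+|s-u|$. $\mathsf{SquaMS}$: these objects, with short maps $f$ satisfying $f\circ S_X=S_Y$ as morphisms. Let $N=\{0,1,2\}^2$, $M=N\setminus\{(1,1)\}$, also viewed as points of $\mathbb{R}^2$. For $X$ in $\mathsf{SquaMS}$, $M\otimes X=(M\times X)/\!\sim$, where $\sim$ is generated by $(m,S_X(p))\sim(n,S_X(q))$ whenever $m,n\in M$ differ by exactly $1$ in exactly one coordinate and $(m+p)/3=(n+q)/3$; $m\otimes x$ is the class of $(m,x)$. With $d((a,u),(b,v))=\frac13 d_X(u,v)$ if $a=b$ and $2$ otherwise, $M\otimes X$ has the quotient metric (infimum over finite chains of sums of consecutive distances, $\sim$-related consecutive pairs counting $0$).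 $S_{M\otimes X}(p)=m\otimes S_X(3p-m)$ for any $m\in M$ with $p\in(m+[0,1]^2)/3$; $(M\otimes f)(m\otimes x)=m\otimes f(x)$. *)

theory Defs
  imports Main "HOL.Real"
begin

record 'a sqms =
  sq_carrier :: "'a set"
  sq_dist :: "'a \<Rightarrow> 'a \<Rightarrow> real"
  sq_map :: "real \<times> real \<Rightarrow> 'a"

definition M0 :: "(real \<times> real) set" where
  "M0 = {(r, s). 0 \<le> r \<and> r \<le> 1 \<and> 0 \<le> s \<and> s \<le> 1 \<and> (r \<in> {0, 1} \<or> s \<in> {0, 1})}"

definition is_sqms :: "'a sqms \<Rightarrow> bool" where
  "is_sqms X \<longleftrightarrow>
     (let C = sq_carrier X; d = sq_dist X; S = sq_map X in
       (\<forall>x\<in>C. \<forall>y\<in>C. 0 \<le> d x y \<and> d x y \<le> 2 \<and> (d x y = 0 \<longleftrightarrow> x = y) \<and> d x y = d y x) \<and>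
       (\<forall>x\<in>C. \<forall>y\<in>C. \<forall>z\<in>C. d x z \<le> d x y + d y z) \<and>
       S ` M0 \<subseteq> C \<and> inj_on S M0 \<and>
       (\<forall>i\<in>{0, 1}. \<forall>r\<in>{0..1}. \<forall>s\<in>{0..1}.
          d (S (i, r)) (S (i, s)) = \<bar>s - r\<bar> \<and> d (S (r, i)) (S (s, i)) = \<bar>s - r\<bar>) \<and>
       (\<forall>p\<in>M0. \<forall>q\<in>M0. d (S p) (S q) \<ge> \<bar>fst p - fst q\<bar> + \<bar>snd p - snd q\<bar>))"

definition sq_hom :: "'a sqms \<Rightarrow> 'b sqms \<Rightarrow> ('a \<Rightarrow> 'b) \<Rightarrow> bool" where
  "sq_hom X Y f \<longleftrightarrow>
     f ` sq_carrier X \<subseteq> sq_carrier Y \<and>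
     (\<forall>x\<in>sq_carrier X. \<forall>y\<in>sq_carrier X. sq_dist Y (f x) (f y) \<le> sq_dist X x y) \<and>
     (\<forall>p\<in>M0. f (sq_map X p) = sq_map Y p)"

definition sq_chain :: "(nat \<Rightarrow> 'a sqms) \<Rightarrow> (nat \<Rightarrow> nat \<Rightarrow> 'a \<Rightarrow> 'a) \<Rightarrow> bool" where
  "sq_chain A a \<longleftrightarrow>
     (\<forall>k. is_sqms (A k)) \<and>
     (\<forall>k l. k \<le> l \<longrightarrow> sq_hom (A k) (A l) (a k l)) \<and>
     (\<forall>k. \<forall>x\<in>sq_carrier (A k). a k k x = x) \<and>
     (\<forall>k l m. k \<le> l \<longrightarrow> l \<le> m \<longrightarrow> (\<forall>x\<in>sq_carrier (A k). a l m (a k l x) = a k m x))"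

definition sq_cocone ::
  "(nat \<Rightarrow> 'a sqms) \<Rightarrow> (nat \<Rightarrow> nat \<Rightarrow> 'a \<Rightarrow> 'a) \<Rightarrow> 'd sqms \<Rightarrow> (nat \<Rightarrow> 'a \<Rightarrow> 'd) \<Rightarrow> bool" where
  "sq_cocone A a D g \<longleftrightarrow>
     is_sqms D \<and> (\<forall>k. sq_hom (A k) D (g k)) \<and>
     (\<forall>k l. k \<le> l \<longrightarrow> (\<forall>x\<in>sq_carrier (A k). g l (a k l x) = g k x))"

text \<open>Colimit: universal among cocones whose vertex lives in the type 'd
  (maps are identified when they agree on the carrier).\<close>
definition sq_colimit ::
  "'d itself \<Rightarrow> (nat \<Rightarrow> 'a sqms) \<Rightarrow> (nat \<Rightarrow> nat \<Rightarrow> 'a \<Rightarrow> 'a) \<Rightarrow> 'c sqms \<Rightarrow> (nat \<Rightarrow> 'a \<Rightarrow> 'c) \<Rightarrow> bool" where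
  "sq_colimit T A a C c \<longleftrightarrow>
     sq_cocone A a C c \<and>
     (\<forall>(D :: 'd sqms) g. sq_cocone A a D g \<longrightarrow>
        (\<exists>h. sq_hom C D h \<and> (\<forall>k. \<forall>x\<in>sq_carrier (A k). h (c k x) = g k x)) \<and>
        (\<forall>h h'. sq_hom C D h \<and> (\<forall>k. \<forall>x\<in>sq_carrier (A k). h (c k x) = g k x) \<and>
                sq_hom C D h' \<and> (\<forall>k. \<forall>x\<in>sq_carrier (A k). h' (c k x) = g k x) \<longrightarrow>
                (\<forall>y\<in>sq_carrier C. h y = h' y)))"

definition Mset :: "(nat \<times> nat) set" where
  "Mset = {(i, j). i \<le> 2 \<and> j \<le> 2} - {(1, 1)}"

definition adjacent :: "nat \<times> nat \<Rightarrow> nat \<times> nat \<Rightarrow> bool" where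
  "adjacent m n \<longleftrightarrow>
     (fst m = fst n \<and> (snd m = snd n + 1 \<or> snd n = snd m + 1)) \<or>
     (snd m = snd n \<and> (fst m = fst n + 1 \<or> fst n = fst m + 1))"

definition tens_gen :: "'a sqms \<Rightarrow> (((nat \<times> nat) \<times> 'a) \<times> ((nat \<times> nat) \<times> 'a)) set" where
  "tens_gen X = {((m, sq_map X p), (n, sq_map X q)) | m n p q.
      m \<in> Mset \<and> n \<in> Mset \<and> adjacent m n \<and> p \<in> M0 \<and> q \<in> M0 \<and>
      (real (fst m) + fst p) / 3 = (real (fst n) + fst q) / 3 \<and>
      (real (snd m) + snd p) / 3 = (real (snd n) + snd q) / 3}"

definition tens_rel :: "'a sqms \<Rightarrow> (((nat \<times> nat) \<times> 'a) \<times> ((nat \<times> nat) \<times> 'a)) set" where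
  "tens_rel X = (tens_gen X \<union> (tens_gen X)\<inverse>)\<^sup>*"

definition tens_pt :: "'a sqms \<Rightarrow> nat \<times> nat \<Rightarrow> 'a \<Rightarrow> ((nat \<times> nat) \<times> 'a) set" where
  "tens_pt X m x = tens_rel X `` {(m, x)}"

definition tens_carrier :: "'a sqms \<Rightarrow> ((nat \<times> nat) \<times> 'a) set set" where
  "tens_carrier X = {tens_pt X m x | m x. m \<in> Mset \<and> x \<in> sq_carrier X}"

definition tens_cost :: "'a sqms \<Rightarrow> (nat \<times> nat) \<times> 'a \<Rightarrow> (nat \<times> nat) \<times> 'a \<Rightarrow> real" where
  "tens_cost X z w =
     (if (z, w) \<in> tens_rel X then 0
      else if fst z = fst w then sq_dist X (snd z) (snd w) / 3 else 2)"

definition tens_dist :: "'a sqms \<Rightarrow> ((nat \<times> nat) \<times> 'a) set \<Rightarrow> ((nat \<times> nat) \<times> 'a) set \<Rightarrow> real" where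
  "tens_dist X P Q = Inf {(\<Sum>i<length zs - 1. tens_cost X (zs ! i) (zs ! Suc i)) | zs.
      zs \<noteq> [] \<and> set zs \<subseteq> Mset \<times> sq_carrier X \<and> hd zs \<in> P \<and> last zs \<in> Q}"

definition tens_sq :: "'a sqms \<Rightarrow> real \<times> real \<Rightarrow> ((nat \<times> nat) \<times> 'a) set" where
  "tens_sq X p =
     (let m = (SOME m. m \<in> Mset \<and> 0 \<le> 3 * fst p - real (fst m) \<and> 3 * fst p - real (fst m) \<le> 1
                          \<and> 0 \<le> 3 * snd p - real (snd m) \<and> 3 * snd p - real (snd m) \<le> 1)
      in tens_pt X m (sq_map X (3 * fst p - real (fst m), 3 * snd p - real (snd m))))"

definition tens :: "'a sqms \<Rightarrow> ((nat \<times> nat) \<times> 'a) set sqms" where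
  "tens X = \<lparr>sq_carrier = tens_carrier X, sq_dist = tens_dist X, sq_map = tens_sq X\<rparr>"

definition tens_map :: "'a sqms \<Rightarrow> 'b sqms \<Rightarrow> ('a \<Rightarrow> 'b) \<Rightarrow> ((nat \<times> nat) \<times> 'a) set \<Rightarrow> ((nat \<times> nat) \<times> 'b) set" where
  "tens_map X Y f P = (let z = (SOME z. z \<in> P \<and> z \<in> Mset \<times> sq_carrier X) in tens_pt Y (fst z) (f (snd z)))"

end

theory Submission
  imports Defs Complex_Main
begin

text \<open>\<open>M \<otimes> X\<close> glues eight copies of \<open>X\<close>, scaled by \<open>1/3\<close>, along their boundary squares and
  carries the induced path metric. Lower bounds for that metric come from functions on the pieces
  that are short for single steps of a path: rescaled McShane extensions of linear functions from
  the boundary square, which give (sq2) and separate boundary points, and bumps around the other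
  points. So \<open>M \<otimes> X\<close> is again a square metric space and \<open>M \<otimes> -\<close> is a functor.

  The colimit \<open>C\<close> is compared with the explicit colimit of the chain (the union of the \<open>A\<^sub>k\<close>
  with the limit pseudometric, modulo distance zero): \<open>d\<^sub>C(c\<^sub>k x, c\<^sub>l y)\<close> is the limit of the
  distances of the images of \<open>x\<close> and \<open>y\<close> in the \<open>A\<^sub>j\<close>, and \<open>C\<close> is exhausted by the images of
  the \<open>c\<^sub>k\<close>. A cocone \<open>g\<close> on the \<open>M \<otimes> A\<^sub>k\<close> therefore induces \<open>h (m \<otimes> c\<^sub>k x) = g\<^sub>k (m \<otimes> x)\<close>:
  it is well defined and short because every \<open>g\<^sub>j\<close> is short and distances of \<open>C\<close> are
  approximated in the \<open>A\<^sub>j\<close>, and it is unique because the \<open>M \<otimes> c\<^sub>k\<close> jointly cover \<open>M \<otimes> C\<close>.\<close>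

section \<open>Square metric spaces\<close>

context
  fixes X :: "'a sqms"
  assumes X: "is_sqms X"
begin

lemma sqms_dist_nonneg: "x \<in> sq_carrier X \<Longrightarrow> y \<in> sq_carrier X \<Longrightarrow> 0 \<le> sq_dist X x y"
  using X unfolding is_sqms_def Let_def by blast

lemma sqms_dist_le_2: "x \<in> sq_carrier X \<Longrightarrow> y \<in> sq_carrier X \<Longrightarrow> sq_dist X x y \<le> 2"
  using X unfolding is_sqms_def Let_def by blast

lemma sqms_dist_eq_0_iff: "x \<in> sq_carrier X \<Longrightarrow> y \<in> sq_carrier X \<Longrightarrow> sq_dist X x y = 0 \<longleftrightarrow> x = y"
  using X unfolding is_sqms_def Let_def by blast

lemma sqms_dist_self [simp]: "x \<in> sq_carrier X \<Longrightarrow> sq_dist X x x = 0"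
  using sqms_dist_eq_0_iff by blast

lemma sqms_eq_if_dist_le_0:
  "x \<in> sq_carrier X \<Longrightarrow> y \<in> sq_carrier X \<Longrightarrow> sq_dist X x y \<le> 0 \<Longrightarrow> x = y"
  using sqms_dist_eq_0_iff sqms_dist_nonneg by force

lemma sqms_dist_commute: "x \<in> sq_carrier X \<Longrightarrow> y \<in> sq_carrier X \<Longrightarrow> sq_dist X x y = sq_dist X y x"
  using X unfolding is_sqms_def Let_def by blast

lemma sqms_dist_triangle:
  "x \<in> sq_carrier X \<Longrightarrow> y \<in> sq_carrier X \<Longrightarrow> z \<in> sq_carrier X \<Longrightarrow>
    sq_dist X x z \<le> sq_dist X x y + sq_dist X y z"
  using X unfolding is_sqms_def Let_def by blast

lemma sqms_map_in_carrier: "p \<in> M0 \<Longrightarrow> sq_map X p \<in> sq_carrier X"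
  using X unfolding is_sqms_def Let_def by blast

lemma sqms_map_inj: "inj_on (sq_map X) M0"
  using X unfolding is_sqms_def Let_def by blast

lemma sqms_vertical_edge:
  "i \<in> {0, 1} \<Longrightarrow> r \<in> {0..1} \<Longrightarrow> s \<in> {0..1} \<Longrightarrow>
    sq_dist X (sq_map X (i, r)) (sq_map X (i, s)) = \<bar>s - r\<bar>"
  using X unfolding is_sqms_def Let_def by blast

lemma sqms_horizontal_edge:
  "i \<in> {0, 1} \<Longrightarrow> r \<in> {0..1} \<Longrightarrow> s \<in> {0..1} \<Longrightarrow>
    sq_dist X (sq_map X (r, i)) (sq_map X (s, i)) = \<bar>s - r\<bar>"
  using X unfolding is_sqms_def Let_def by blast

lemma sqms_dist_map_lower:
  "p \<in> M0 \<Longrightarrow> q \<in> M0 \<Longrightarrow> \<bar>fst p - fst q\<bar> + \<bar>snd p - snd q\<bar> \<le> sq_dist X (sq_map X p) (sq_map X q)"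
  using X unfolding is_sqms_def Let_def by blast

end

lemma eq_if_l1_dist_le_0:
  fixes p q :: "real \<times> real"
  shows "\<bar>fst p - fst q\<bar> + \<bar>snd p - snd q\<bar> \<le> 0 \<Longrightarrow> p = q"
  using abs_ge_zero[of "fst p - fst q"] abs_ge_zero[of "snd p - snd q"] by (simp add: prod_eq_iff)

lemma is_sqmsI:
  assumes "\<And>x y. x \<in> sq_carrier X \<Longrightarrow> y \<in> sq_carrier X \<Longrightarrow> 0 \<le> sq_dist X x y"
    and "\<And>x y. x \<in> sq_carrier X \<Longrightarrow> y \<in> sq_carrier X \<Longrightarrow> sq_dist X x y \<le> 2"
    and eq_0_iff: "\<And>x y. x \<in> sq_carrier X \<Longrightarrow> y \<in> sq_carrier X \<Longrightarrow> sq_dist X x y = 0 \<longleftrightarrow> x = y"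
    and "\<And>x y. x \<in> sq_carrier X \<Longrightarrow> y \<in> sq_carrier X \<Longrightarrow> sq_dist X x y = sq_dist X y x"
    and "\<And>x y z. x \<in> sq_carrier X \<Longrightarrow> y \<in> sq_carrier X \<Longrightarrow> z \<in> sq_carrier X \<Longrightarrow>
      sq_dist X x z \<le> sq_dist X x y + sq_dist X y z"
    and map_in: "\<And>p. p \<in> M0 \<Longrightarrow> sq_map X p \<in> sq_carrier X"
    and "\<And>i r s. i \<in> {0, 1} \<Longrightarrow> r \<in> {0..1} \<Longrightarrow> s \<in> {0..1} \<Longrightarrow>
      sq_dist X (sq_map X (i, r)) (sq_map X (i, s)) = \<bar>s - r\<bar>"
    and "\<And>i r s. i \<in> {0, 1} \<Longrightarrow> r \<in> {0..1} \<Longrightarrow> s \<in> {0..1} \<Longrightarrow>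
      sq_dist X (sq_map X (r, i)) (sq_map X (s, i)) = \<bar>s - r\<bar>"
    and lower: "\<And>p q. p \<in> M0 \<Longrightarrow> q \<in> M0 \<Longrightarrow>
      \<bar>fst p - fst q\<bar> + \<bar>snd p - snd q\<bar> \<le> sq_dist X (sq_map X p) (sq_map X q)"
  shows "is_sqms X"
proof -
  have "inj_on (sq_map X) M0"
  proof (rule inj_onI)
    fix p q assume p: "p \<in> M0" and q: "q \<in> M0" and "sq_map X p = sq_map X q"
    then have "sq_dist X (sq_map X p) (sq_map X q) = 0" using eq_0_iff map_in by blast
    then show "p = q" using lower[OF p q] by (intro eq_if_l1_dist_le_0) simp
  qed
  then show ?thesis
    unfolding is_sqms_def Let_def using assms by (auto simp: image_subset_iff)
qed

lemma M0_iff: "(r, s) \<in> M0 \<longleftrightarrow> 0 \<le> r \<and> r \<le> 1 \<and> 0 \<le> s \<and> s \<le> 1 \<and> (r = 0 \<or> r = 1 \<or> s = 0 \<or> s = 1)"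
  unfolding M0_def by auto

lemma M0_bounds: "p \<in> M0 \<Longrightarrow> 0 \<le> fst p \<and> fst p \<le> 1 \<and> 0 \<le> snd p \<and> snd p \<le> 1"
  by (cases p) (auto simp: M0_iff)

lemma zero_in_M0: "(0, 0) \<in> M0"
  by (simp add: M0_iff)

lemma vertical_edge_in_M0: "i \<in> {0, 1} \<Longrightarrow> t \<in> {0..1} \<Longrightarrow> (i, t) \<in> M0"
  and horizontal_edge_in_M0: "i \<in> {0, 1} \<Longrightarrow> t \<in> {0..1} \<Longrightarrow> (t, i) \<in> M0"
  by (auto simp: M0_iff)

lemma sq_homD:
  assumes "sq_hom X Y f"
  shows "x \<in> sq_carrier X \<Longrightarrow> f x \<in> sq_carrier Y"
    and "x \<in> sq_carrier X \<Longrightarrow> y \<in> sq_carrier X \<Longrightarrow> sq_dist Y (f x) (f y) \<le> sq_dist X x y"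
    and "p \<in> M0 \<Longrightarrow> f (sq_map X p) = sq_map Y p"
  using assms unfolding sq_hom_def by blast+

section \<open>The gluing relation of \<open>M \<otimes> X\<close>\<close>

definition tens_pos :: "nat \<times> nat \<Rightarrow> real \<times> real \<Rightarrow> real \<times> real" where
  "tens_pos m p = ((real (fst m) + fst p) / 3, (real (snd m) + snd p) / 3)"

lemma Mset_iff: "m \<in> Mset \<longleftrightarrow> fst m \<le> 2 \<and> snd m \<le> 2 \<and> m \<noteq> (1, 1)"
  unfolding Mset_def by (cases m) auto

lemma tens_rel_refl [simp]: "(z, z) \<in> tens_rel X"
  unfolding tens_rel_def by simp

lemma tens_rel_sym: "(z, w) \<in> tens_rel X \<Longrightarrow> (w, z) \<in> tens_rel X"
  using sym_rtrancl[OF sym_Un_converse[of "tens_gen X"]] unfolding sym_def tens_rel_def by blast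

lemma tens_rel_trans: "(z, w) \<in> tens_rel X \<Longrightarrow> (w, u) \<in> tens_rel X \<Longrightarrow> (z, u) \<in> tens_rel X"
  unfolding tens_rel_def by (rule rtrancl_trans)

lemma tens_rel_adjacentI:
  assumes "m \<in> Mset" "n \<in> Mset" "adjacent m n" "p \<in> M0" "q \<in> M0" "tens_pos m p = tens_pos n q"
  shows "((m, sq_map X p), (n, sq_map X q)) \<in> tens_rel X"
proof -
  have "((m, sq_map X p), (n, sq_map X q)) \<in> tens_gen X"
    using assms unfolding tens_gen_def tens_pos_def by blast
  then show ?thesis unfolding tens_rel_def by blast
qed

lemma tens_rel_cases:
  assumes X: "is_sqms X" and "(z, w) \<in> tens_rel X"
  obtains (refl) "z = w"
    | (glued) p q where "p \<in> M0" "q \<in> M0" "snd z = sq_map X p" "snd w = sq_map X q"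
        "fst z \<in> Mset" "fst w \<in> Mset" "tens_pos (fst z) p = tens_pos (fst w) q"
proof -
  have "z = w \<or> (\<exists>p q. p \<in> M0 \<and> q \<in> M0 \<and> snd z = sq_map X p \<and> snd w = sq_map X q \<and>
      fst z \<in> Mset \<and> fst w \<in> Mset \<and> tens_pos (fst z) p = tens_pos (fst w) q)"
    using \<open>(z, w) \<in> tens_rel X\<close> unfolding tens_rel_def
  proof (induction rule: rtrancl_induct)
    case (step y u)
    from step(2) obtain m n p' q' where yu: "y = (m, sq_map X p')" "u = (n, sq_map X q')"
      and h: "p' \<in> M0" "q' \<in> M0" "m \<in> Mset" "n \<in> Mset" "tens_pos m p' = tens_pos n q'"
      unfolding tens_gen_def tens_pos_def by auto
    from step(3) show ?case
    proof
      assume "z = y"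
      then show ?thesis using yu h by (intro disjI2 exI[of _ p'] exI[of _ q']) auto
    next
      assume "\<exists>p q. p \<in> M0 \<and> q \<in> M0 \<and> snd z = sq_map X p \<and> snd y = sq_map X q \<and>
          fst z \<in> Mset \<and> fst y \<in> Mset \<and> tens_pos (fst z) p = tens_pos (fst y) q"
      then obtain p q where pq: "p \<in> M0" "q \<in> M0" "snd z = sq_map X p" "snd y = sq_map X q"
        "fst z \<in> Mset" "tens_pos (fst z) p = tens_pos (fst y) q" by blast
      have "q = p'" using inj_onD[OF sqms_map_inj[OF X]] pq yu h by auto
      then show ?thesis using pq yu h by (intro disjI2 exI[of _ p] exI[of _ q']) auto
    qed
  qed simp
  then show ?thesis using that by blast
qed

lemma nat_close_if_real_close:
  fixes a b :: nat and u v :: real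
  assumes "real a + u = real b + v" "0 \<le> u" "u \<le> 1" "0 \<le> v" "v \<le> 1"
  shows "a = b \<or> a = b + 1 \<or> b = a + 1"
proof -
  have "real a \<le> real b + 1" "real b \<le> real a + 1" using assms by linarith+
  then show ?thesis by linarith
qed

text \<open>Diagonal neighbours share only a corner; the path passes through one of the two cells
  adjacent to both, at least one of which is not the hole \<open>(1, 1)\<close>.\<close>

lemma tens_rel_diagonal:
  assumes m: "m \<in> Mset" and n: "n \<in> Mset" and p: "p \<in> M0" and q: "q \<in> M0"
    and pos: "tens_pos m p = tens_pos n q" and d1: "fst m \<noteq> fst n" and d2: "snd m \<noteq> snd n"
  shows "((m, sq_map X p), (n, sq_map X q)) \<in> tens_rel X"
proof -
  obtain m1 m2 n1 n2 where mm: "m = (m1, m2)" and nn: "n = (n1, n2)" by (cases m, cases n)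
  obtain p1 p2 q1 q2 where pp: "p = (p1, p2)" and qq: "q = (q1, q2)" by (cases p, cases q)
  have e1: "real m1 + p1 = real n1 + q1" and e2: "real m2 + p2 = real n2 + q2"
    using pos unfolding tens_pos_def mm nn pp qq by auto
  have bp: "0 \<le> p1" "p1 \<le> 1" "0 \<le> p2" "p2 \<le> 1" using M0_bounds[OF p] pp by auto
  have bq: "0 \<le> q1" "q1 \<le> 1" "0 \<le> q2" "q2 \<le> 1" using M0_bounds[OF q] qq by auto
  have c1: "m1 = n1 + 1 \<or> n1 = m1 + 1" using nat_close_if_real_close[OF e1] bp bq d1 mm nn by auto
  have c2: "m2 = n2 + 1 \<or> n2 = m2 + 1" using nat_close_if_real_close[OF e2] bp bq d2 mm nn by auto
  have p1c: "p1 \<in> {0, 1}" and q1c: "q1 \<in> {0, 1}" using c1 e1 bp bq by auto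
  have p2c: "p2 \<in> {0, 1}" and q2c: "q2 \<in> {0, 1}" using c2 e2 bp bq by auto
  have mb: "m1 \<le> 2" "m2 \<le> 2" "n1 \<le> 2" "n2 \<le> 2" using m n mm nn by (auto simp: Mset_iff)
  show ?thesis
  proof (cases "(m1, n2) = (1, 1)")
    case False
    have w: "(m1, n2) \<in> Mset" using False mb by (auto simp: Mset_iff)
    have r: "(p1, q2) \<in> M0" using p1c q2c bq bp by (auto simp: M0_iff)
    have "((m, sq_map X p), ((m1, n2), sq_map X (p1, q2))) \<in> tens_rel X"
      by (rule tens_rel_adjacentI[OF m w _ p r]) (use c2 e2 pp mm in \<open>auto simp: adjacent_def tens_pos_def\<close>)
    moreover have "(((m1, n2), sq_map X (p1, q2)), (n, sq_map X q)) \<in> tens_rel X"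
      by (rule tens_rel_adjacentI[OF w n _ r q]) (use c1 e1 qq nn in \<open>auto simp: adjacent_def tens_pos_def\<close>)
    ultimately show ?thesis by (rule tens_rel_trans)
  next
    case True
    have w: "(n1, m2) \<in> Mset" using True c1 c2 mb by (auto simp: Mset_iff)
    have r: "(q1, p2) \<in> M0" using q1c p2c bq bp by (auto simp: M0_iff)
    have "((m, sq_map X p), ((n1, m2), sq_map X (q1, p2))) \<in> tens_rel X"
      by (rule tens_rel_adjacentI[OF m w _ p r]) (use c1 e1 pp mm in \<open>auto simp: adjacent_def tens_pos_def\<close>)
    moreover have "(((n1, m2), sq_map X (q1, p2)), (n, sq_map X q)) \<in> tens_rel X"
      by (rule tens_rel_adjacentI[OF w n _ r q]) (use c2 e2 qq nn in \<open>auto simp: adjacent_def tens_pos_def\<close>)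
    ultimately show ?thesis by (rule tens_rel_trans)
  qed
qed

lemma tens_rel_if_same_pos:
  assumes m: "m \<in> Mset" and n: "n \<in> Mset" and p: "p \<in> M0" and q: "q \<in> M0"
    and pos: "tens_pos m p = tens_pos n q"
  shows "((m, sq_map X p), (n, sq_map X q)) \<in> tens_rel X"
proof (cases "m = n")
  case True
  then have "p = q" using pos by (auto simp: tens_pos_def prod_eq_iff)
  then show ?thesis using True by simp
next
  case False
  have close: "fst m = fst n \<or> fst m = fst n + 1 \<or> fst n = fst m + 1"
    "snd m = snd n \<or> snd m = snd n + 1 \<or> snd n = snd m + 1"
    using pos M0_bounds[OF p] M0_bounds[OF q]
    by (auto simp: tens_pos_def intro!: nat_close_if_real_close)
  show ?thesis
  proof (cases "adjacent m n")
    case True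
    then show ?thesis by (rule tens_rel_adjacentI[OF m n _ p q pos])
  next
    case False
    then have "fst m \<noteq> fst n" "snd m \<noteq> snd n"
      using \<open>m \<noteq> n\<close> close unfolding adjacent_def by (auto simp: prod_eq_iff)
    then show ?thesis by (rule tens_rel_diagonal[OF m n p q pos])
  qed
qed

lemma mem_tens_pt: "z \<in> tens_pt X m x \<longleftrightarrow> ((m, x), z) \<in> tens_rel X"
  unfolding tens_pt_def by simp

lemma tens_pt_self: "(m, x) \<in> tens_pt X m x"
  by (simp add: mem_tens_pt)

lemma tens_pt_eqI: "((m, x), (n, y)) \<in> tens_rel X \<Longrightarrow> tens_pt X m x = tens_pt X n y"
  unfolding tens_pt_def using tens_rel_sym tens_rel_trans by blast

lemma tens_rel_if_in_same_pt: "z \<in> tens_pt X m x \<Longrightarrow> w \<in> tens_pt X m x \<Longrightarrow> (z, w) \<in> tens_rel X"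
  using mem_tens_pt tens_rel_sym tens_rel_trans by metis

lemma tens_carrierI: "(m, x) \<in> Mset \<times> sq_carrier X \<Longrightarrow> tens_pt X m x \<in> tens_carrier X"
  unfolding tens_carrier_def by blast

lemma tens_carrierE:
  assumes "P \<in> tens_carrier X"
  obtains m x where "P = tens_pt X m x" "(m, x) \<in> Mset \<times> sq_carrier X"
  using assms unfolding tens_carrier_def by blast

lemma tens_simps [simp]:
  "sq_carrier (tens X) = tens_carrier X" "sq_dist (tens X) = tens_dist X" "sq_map (tens X) = tens_sq X"
  unfolding tens_def by simp_all

section \<open>The chain metric of \<open>M \<otimes> X\<close>\<close>

fun chain_cost :: "'a sqms \<Rightarrow> ((nat \<times> nat) \<times> 'a) list \<Rightarrow> real" where
  "chain_cost X (z # w # zs) = tens_cost X z w + chain_cost X (w # zs)"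
| "chain_cost X _ = 0"

lemma sum_tens_cost_eq_chain_cost:
  "(\<Sum>i<length zs - 1. tens_cost X (zs ! i) (zs ! Suc i)) = chain_cost X zs"
proof (induction X zs rule: chain_cost.induct)
  case (1 X z w zs)
  have "(\<Sum>i<length (z # w # zs) - 1. tens_cost X ((z # w # zs) ! i) ((z # w # zs) ! Suc i))
      = tens_cost X z w + (\<Sum>i<length (w # zs) - 1. tens_cost X ((w # zs) ! i) ((w # zs) ! Suc i))"
    by (simp add: sum.lessThan_Suc_shift del: sum.lessThan_Suc)
  then show ?case using 1 by simp
qed auto

definition tens_chains ::
  "'a sqms \<Rightarrow> ((nat \<times> nat) \<times> 'a) set \<Rightarrow> ((nat \<times> nat) \<times> 'a) set \<Rightarrow> ((nat \<times> nat) \<times> 'a) list set" where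
  "tens_chains X P Q = {zs. zs \<noteq> [] \<and> set zs \<subseteq> Mset \<times> sq_carrier X \<and> hd zs \<in> P \<and> last zs \<in> Q}"

lemma tens_dist_eq_Inf: "tens_dist X P Q = Inf (chain_cost X ` tens_chains X P Q)"
  unfolding tens_dist_def sum_tens_cost_eq_chain_cost tens_chains_def
  by (rule arg_cong[where f = Inf]) auto

lemma tens_cost_rel: "(z, w) \<in> tens_rel X \<Longrightarrow> tens_cost X z w = 0"
  unfolding tens_cost_def by simp

context
  fixes X :: "'a sqms"
  assumes X: "is_sqms X"
begin

lemma tens_cost_nonneg: "snd z \<in> sq_carrier X \<Longrightarrow> snd w \<in> sq_carrier X \<Longrightarrow> 0 \<le> tens_cost X z w"
  unfolding tens_cost_def using sqms_dist_nonneg[OF X] by auto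

lemma tens_cost_le_2: "snd z \<in> sq_carrier X \<Longrightarrow> snd w \<in> sq_carrier X \<Longrightarrow> tens_cost X z w \<le> 2"
  unfolding tens_cost_def using sqms_dist_le_2[OF X, of "snd z" "snd w"] by auto

lemma tens_cost_commute:
  assumes "snd z \<in> sq_carrier X" "snd w \<in> sq_carrier X"
  shows "tens_cost X z w = tens_cost X w z"
proof -
  have "(z, w) \<in> tens_rel X \<longleftrightarrow> (w, z) \<in> tens_rel X" using tens_rel_sym by blast
  then show ?thesis unfolding tens_cost_def using sqms_dist_commute[OF X assms] by auto
qed

lemma tens_cost_same_cell:
  "snd z \<in> sq_carrier X \<Longrightarrow> snd w \<in> sq_carrier X \<Longrightarrow> fst z = fst w \<Longrightarrow>
    tens_cost X z w \<le> sq_dist X (snd z) (snd w) / 3"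
  unfolding tens_cost_def using sqms_dist_nonneg[OF X, of "snd z" "snd w"] by auto

end

lemma chain_cost_nonneg: "is_sqms X \<Longrightarrow> set zs \<subseteq> Mset \<times> sq_carrier X \<Longrightarrow> 0 \<le> chain_cost X zs"
  by (induction X zs rule: chain_cost.induct) (auto intro!: add_nonneg_nonneg tens_cost_nonneg)

lemma chain_cost_append:
  "zs \<noteq> [] \<Longrightarrow> ws \<noteq> [] \<Longrightarrow>
    chain_cost X (zs @ ws) = chain_cost X zs + tens_cost X (last zs) (hd ws) + chain_cost X ws"
proof (induction zs)
  case (Cons z zs)
  then show ?case by (cases zs; cases ws) auto
qed simp

lemma chain_cost_rev:
  "is_sqms X \<Longrightarrow> set zs \<subseteq> Mset \<times> sq_carrier X \<Longrightarrow> chain_cost X (rev zs) = chain_cost X zs"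
proof (induction X zs rule: chain_cost.induct)
  case (1 X z w zs)
  have "chain_cost X (rev (z # w # zs)) = chain_cost X (rev (w # zs) @ [z])" by simp
  also have "\<dots> = chain_cost X (rev (w # zs)) + tens_cost X w z"
    by (subst chain_cost_append) auto
  also have "\<dots> = chain_cost X (w # zs) + tens_cost X z w"
    using 1 tens_cost_commute[of X w z] by auto
  finally show ?case by simp
qed auto

lemma two_point_chain:
  "(m, x) \<in> Mset \<times> sq_carrier X \<Longrightarrow> (n, y) \<in> Mset \<times> sq_carrier X \<Longrightarrow>
    [(m, x), (n, y)] \<in> tens_chains X (tens_pt X m x) (tens_pt X n y)"
  unfolding tens_chains_def by (auto simp: tens_pt_self)

context
  fixes X :: "'a sqms"
  assumes X: "is_sqms X"
begin

lemma tens_dist_le_chain_cost: "zs \<in> tens_chains X P Q \<Longrightarrow> tens_dist X P Q \<le> chain_cost X zs"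
  unfolding tens_dist_eq_Inf
  by (rule cInf_lower) (auto simp: bdd_below_def tens_chains_def intro!: exI[of _ 0] chain_cost_nonneg[OF X])

lemma tens_dist_le_cost:
  "(m, x) \<in> Mset \<times> sq_carrier X \<Longrightarrow> (n, y) \<in> Mset \<times> sq_carrier X \<Longrightarrow>
    tens_dist X (tens_pt X m x) (tens_pt X n y) \<le> tens_cost X (m, x) (n, y)"
  using tens_dist_le_chain_cost[OF two_point_chain, of m x n y] by simp

lemma tens_dist_nonneg:
  assumes "(m, x) \<in> Mset \<times> sq_carrier X" "(n, y) \<in> Mset \<times> sq_carrier X"
  shows "0 \<le> tens_dist X (tens_pt X m x) (tens_pt X n y)"
  unfolding tens_dist_eq_Inf
proof (rule cInf_greatest)
  show "chain_cost X ` tens_chains X (tens_pt X m x) (tens_pt X n y) \<noteq> {}"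
    using two_point_chain[OF assms] by blast
qed (auto simp: tens_chains_def intro!: chain_cost_nonneg[OF X])

lemma tens_dist_le_2:
  "(m, x) \<in> Mset \<times> sq_carrier X \<Longrightarrow> (n, y) \<in> Mset \<times> sq_carrier X \<Longrightarrow>
    tens_dist X (tens_pt X m x) (tens_pt X n y) \<le> 2"
  using tens_dist_le_cost[of m x n y] tens_cost_le_2[OF X, of "(m, x)" "(n, y)"] by force

lemma tens_dist_self: "(m, x) \<in> Mset \<times> sq_carrier X \<Longrightarrow> tens_dist X (tens_pt X m x) (tens_pt X m x) = 0"
  using tens_dist_le_cost[of m x m x] tens_dist_nonneg[of m x m x] tens_cost_rel[of "(m, x)" "(m, x)" X]
  by simp

lemma tens_dist_commute_le:
  assumes "(m, x) \<in> Mset \<times> sq_carrier X" "(n, y) \<in> Mset \<times> sq_carrier X"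
  shows "tens_dist X (tens_pt X m x) (tens_pt X n y) \<le> tens_dist X (tens_pt X n y) (tens_pt X m x)"
  unfolding tens_dist_eq_Inf[of X "tens_pt X n y"]
proof (rule cInf_greatest)
  show "chain_cost X ` tens_chains X (tens_pt X n y) (tens_pt X m x) \<noteq> {}"
    using two_point_chain[OF assms(2,1)] by blast
next
  fix r assume "r \<in> chain_cost X ` tens_chains X (tens_pt X n y) (tens_pt X m x)"
  then obtain zs where zs: "zs \<in> tens_chains X (tens_pt X n y) (tens_pt X m x)"
    and r: "r = chain_cost X zs" by auto
  have "rev zs \<in> tens_chains X (tens_pt X m x) (tens_pt X n y)"
    using zs unfolding tens_chains_def by (auto simp: hd_rev last_rev)
  then have "tens_dist X (tens_pt X m x) (tens_pt X n y) \<le> chain_cost X (rev zs)"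
    by (rule tens_dist_le_chain_cost)
  also have "\<dots> = r" using zs r X by (auto simp: tens_chains_def intro: chain_cost_rev)
  finally show "tens_dist X (tens_pt X m x) (tens_pt X n y) \<le> r" .
qed

lemma tens_dist_commute:
  "(m, x) \<in> Mset \<times> sq_carrier X \<Longrightarrow> (n, y) \<in> Mset \<times> sq_carrier X \<Longrightarrow>
    tens_dist X (tens_pt X m x) (tens_pt X n y) = tens_dist X (tens_pt X n y) (tens_pt X m x)"
  using tens_dist_commute_le by (meson antisym)

lemma tens_dist_triangle:
  assumes a: "(m, x) \<in> Mset \<times> sq_carrier X" and b: "(n, y) \<in> Mset \<times> sq_carrier X"
    and c: "(k, u) \<in> Mset \<times> sq_carrier X"
  shows "tens_dist X (tens_pt X m x) (tens_pt X k u)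
     \<le> tens_dist X (tens_pt X m x) (tens_pt X n y) + tens_dist X (tens_pt X n y) (tens_pt X k u)"
proof -
  let ?P = "tens_pt X m x" and ?Q = "tens_pt X n y" and ?R = "tens_pt X k u"
  have concat: "tens_dist X ?P ?R \<le> chain_cost X zs + chain_cost X ws"
    if zs: "zs \<in> tens_chains X ?P ?Q" and ws: "ws \<in> tens_chains X ?Q ?R" for zs ws
  proof -
    have "zs @ ws \<in> tens_chains X ?P ?R" using zs ws unfolding tens_chains_def by auto
    then have "tens_dist X ?P ?R \<le> chain_cost X (zs @ ws)" by (rule tens_dist_le_chain_cost)
    also have "\<dots> = chain_cost X zs + tens_cost X (last zs) (hd ws) + chain_cost X ws"
      using zs ws unfolding tens_chains_def by (intro chain_cost_append) auto
    also have "tens_cost X (last zs) (hd ws) = 0"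
      using zs ws unfolding tens_chains_def by (intro tens_cost_rel tens_rel_if_in_same_pt[of _ X n y]) auto
    finally show ?thesis by simp
  qed
  have "tens_dist X ?P ?R - chain_cost X ws \<le> tens_dist X ?P ?Q" if "ws \<in> tens_chains X ?Q ?R" for ws
    unfolding tens_dist_eq_Inf[of X ?P ?Q]
    by (rule cInf_greatest) (use two_point_chain[OF a b] concat that in force)+
  then have "tens_dist X ?P ?R - tens_dist X ?P ?Q \<le> tens_dist X ?Q ?R"
    unfolding tens_dist_eq_Inf[of X ?Q ?R]
    by (intro cInf_greatest) (use two_point_chain[OF b c] in force)+
  then show ?thesis by simp
qed

end

context
  fixes X :: "'a sqms" and \<delta> :: "'b \<Rightarrow> 'b \<Rightarrow> real" and F :: "(nat \<times> nat) \<times> 'a \<Rightarrow> 'b"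
  assumes step: "\<And>z w. z \<in> Mset \<times> sq_carrier X \<Longrightarrow> w \<in> Mset \<times> sq_carrier X \<Longrightarrow>
      \<delta> (F z) (F w) \<le> tens_cost X z w"
    and triangle: "\<And>z w u. z \<in> Mset \<times> sq_carrier X \<Longrightarrow> w \<in> Mset \<times> sq_carrier X \<Longrightarrow>
      u \<in> Mset \<times> sq_carrier X \<Longrightarrow> \<delta> (F z) (F u) \<le> \<delta> (F z) (F w) + \<delta> (F w) (F u)"
begin

lemma related_step_le_0:
  "z \<in> Mset \<times> sq_carrier X \<Longrightarrow> w \<in> Mset \<times> sq_carrier X \<Longrightarrow> (z, w) \<in> tens_rel X \<Longrightarrow> \<delta> (F z) (F w) \<le> 0"
  using step tens_cost_rel by fastforce

lemma chain_cost_lower_bound: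
  "zs \<noteq> [] \<Longrightarrow> set zs \<subseteq> Mset \<times> sq_carrier X \<Longrightarrow> \<delta> (F (hd zs)) (F (last zs)) \<le> chain_cost X zs"
proof (induction zs rule: induct_list012)
  case (2 z)
  then show ?case using related_step_le_0[of z z] by simp
next
  case (3 z w zs)
  have "\<delta> (F z) (F (last (w # zs))) \<le> \<delta> (F z) (F w) + \<delta> (F w) (F (last (w # zs)))"
    using 3 by (intro triangle) auto
  then show ?case using 3 step[of z w] by simp
qed simp

lemma tens_dist_lower_bound:
  assumes a: "(m, x) \<in> Mset \<times> sq_carrier X" and b: "(n, y) \<in> Mset \<times> sq_carrier X"
  shows "\<delta> (F (m, x)) (F (n, y)) \<le> tens_dist X (tens_pt X m x) (tens_pt X n y)"
  unfolding tens_dist_eq_Inf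
proof (rule cInf_greatest)
  show "chain_cost X ` tens_chains X (tens_pt X m x) (tens_pt X n y) \<noteq> {}"
    using two_point_chain[OF a b] by blast
next
  fix r assume "r \<in> chain_cost X ` tens_chains X (tens_pt X m x) (tens_pt X n y)"
  then obtain zs where zs: "zs \<in> tens_chains X (tens_pt X m x) (tens_pt X n y)"
    and r: "r = chain_cost X zs" by auto
  then have ne: "zs \<noteq> []" and sub: "set zs \<subseteq> Mset \<times> sq_carrier X"
    and hd: "((m, x), hd zs) \<in> tens_rel X" and last: "(last zs, (n, y)) \<in> tens_rel X"
    unfolding tens_chains_def by (auto simp: mem_tens_pt tens_rel_sym)
  have hd_in: "hd zs \<in> Mset \<times> sq_carrier X" and last_in: "last zs \<in> Mset \<times> sq_carrier X"
    using ne sub by auto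
  have "\<delta> (F (m, x)) (F (n, y)) \<le> \<delta> (F (m, x)) (F (hd zs)) + \<delta> (F (hd zs)) (F (n, y))"
    using a b hd_in by (intro triangle)
  also have "\<delta> (F (hd zs)) (F (n, y)) \<le> \<delta> (F (hd zs)) (F (last zs)) + \<delta> (F (last zs)) (F (n, y))"
    using b hd_in last_in by (intro triangle)
  finally show "\<delta> (F (m, x)) (F (n, y)) \<le> r"
    using related_step_le_0[OF a hd_in hd] related_step_le_0[OF last_in b last] chain_cost_lower_bound[OF ne sub] r by linarith
qed

end

section \<open>The square map of \<open>M \<otimes> X\<close>\<close>

definition in_cell :: "nat \<times> nat \<Rightarrow> real \<times> real \<Rightarrow> bool" where
  "in_cell m p \<longleftrightarrow> m \<in> Mset \<and> 0 \<le> 3 * fst p - real (fst m) \<and> 3 * fst p - real (fst m) \<le> 1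
                          \<and> 0 \<le> 3 * snd p - real (snd m) \<and> 3 * snd p - real (snd m) \<le> 1"

definition cell_coord :: "nat \<times> nat \<Rightarrow> real \<times> real \<Rightarrow> real \<times> real" where
  "cell_coord m p = (3 * fst p - real (fst m), 3 * snd p - real (snd m))"

definition chosen_cell :: "real \<times> real \<Rightarrow> nat \<times> nat" where
  "chosen_cell p = (SOME m. in_cell m p)"

definition third_index :: "real \<Rightarrow> nat" where
  "third_index t = (if t \<le> 1/3 then 0 else if t \<le> 2/3 then 1 else 2)"

lemma tens_sq_eq: "tens_sq X p = tens_pt X (chosen_cell p) (sq_map X (cell_coord (chosen_cell p) p))"
  unfolding tens_sq_def chosen_cell_def in_cell_def cell_coord_def Let_def by simp

lemma in_cell_Mset: "in_cell m p \<Longrightarrow> m \<in> Mset"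
  unfolding in_cell_def by simp

lemma in_chosen_cell: "p \<in> M0 \<Longrightarrow> in_cell (chosen_cell p) p"
proof -
  assume "p \<in> M0"
  then have "in_cell (third_index (fst p), third_index (snd p)) p"
    unfolding in_cell_def third_index_def Mset_iff by (cases p) (auto simp: M0_iff)
  then show ?thesis unfolding chosen_cell_def by (rule someI)
qed

lemma cell_coord_in_M0:
  assumes p: "p \<in> M0" and m: "in_cell m p"
  shows "cell_coord m p \<in> M0"
proof -
  obtain p1 p2 m1 m2 where pp: "p = (p1, p2)" and mm: "m = (m1, m2)" by (cases p, cases m)
  have b: "real m1 \<le> 2" "real m2 \<le> 2" using m mm unfolding in_cell_def Mset_iff by auto
  have v: "0 \<le> 3 * p1 - real m1" "3 * p1 - real m1 \<le> 1" "0 \<le> 3 * p2 - real m2" "3 * p2 - real m2 \<le> 1"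
    using m unfolding in_cell_def pp mm by auto
  have "p1 = 0 \<or> p1 = 1 \<or> p2 = 0 \<or> p2 = 1" using p pp by (auto simp: M0_iff)
  then have "3 * p1 - real m1 \<in> {0, 1} \<or> 3 * p2 - real m2 \<in> {0, 1}"
    using v b by (smt (verit) insert_iff of_nat_0_le_iff)
  then show ?thesis using v unfolding cell_coord_def pp mm by (auto simp: M0_iff)
qed

lemma tens_pos_cell_coord [simp]: "tens_pos m (cell_coord m p) = p"
  unfolding tens_pos_def cell_coord_def by (cases p) auto

lemma tens_sq_in_cell:
  assumes p: "p \<in> M0" and m: "in_cell m p"
  shows "tens_sq X p = tens_pt X m (sq_map X (cell_coord m p))"
  unfolding tens_sq_eq
  using in_chosen_cell[OF p] m cell_coord_in_M0[OF p]
  by (intro tens_pt_eqI tens_rel_if_same_pos in_cell_Mset) auto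

lemma chosen_cell_coord_in:
  "is_sqms X \<Longrightarrow> p \<in> M0 \<Longrightarrow> (chosen_cell p, sq_map X (cell_coord (chosen_cell p) p)) \<in> Mset \<times> sq_carrier X"
  using in_chosen_cell cell_coord_in_M0 in_cell_Mset sqms_map_in_carrier by blast

section \<open>Lower bounds for the metric of \<open>M \<otimes> X\<close>\<close>

text \<open>The McShane extension of \<open>p \<mapsto> \<sigma> p\<^sub>1 + \<tau> p\<^sub>2\<close> from the boundary square to \<open>X\<close>;
  by (sq2) it is an extension when \<open>\<sigma>, \<tau> \<in> {-1, 1}\<close>.\<close>

definition boundary_potential :: "'a sqms \<Rightarrow> real \<Rightarrow> real \<Rightarrow> 'a \<Rightarrow> real" where
  "boundary_potential X \<sigma> \<tau> z = Inf ((\<lambda>p. sq_dist X z (sq_map X p) + \<sigma> * fst p + \<tau> * snd p) ` M0)"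

definition clamp :: "real \<Rightarrow> real \<Rightarrow> real" where
  "clamp l t = max l (min (l + 2) t)"

definition lin_min :: "real \<Rightarrow> real \<Rightarrow> real" where
  "lin_min \<sigma> \<tau> = min 0 \<sigma> + min 0 \<tau>"

text \<open>Clamping to an interval of length 2 that contains all values \<open>\<sigma> p\<^sub>1 + \<tau> p\<^sub>2\<close> keeps the
  test exact on the boundary while making jumps between pieces cost at most 2.\<close>

definition linear_test :: "'a sqms \<Rightarrow> real \<Rightarrow> real \<Rightarrow> (nat \<times> nat) \<times> 'a \<Rightarrow> real" where
  "linear_test X \<sigma> \<tau> z =
     (\<sigma> * real (fst (fst z)) + \<tau> * real (snd (fst z)) + clamp (lin_min \<sigma> \<tau>) (boundary_potential X \<sigma> \<tau> (snd z))) / 3"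

lemma clamp_lipschitz: "\<bar>clamp l a - clamp l b\<bar> \<le> \<bar>a - b\<bar>"
  unfolding clamp_def by (auto simp: max_def min_def)

lemma clamp_id: "l \<le> t \<Longrightarrow> t \<le> l + 2 \<Longrightarrow> clamp l t = t"
  unfolding clamp_def by auto

lemma clamp_bounds: "l \<le> clamp l t" "clamp l t \<le> l + 2"
  unfolding clamp_def by auto

context
  fixes X :: "'a sqms" and \<sigma> \<tau> :: real
  assumes X: "is_sqms X" and signs: "\<sigma> \<in> {-1, 1}" "\<tau> \<in> {-1, 1}"
begin

lemma boundary_potential_le:
  assumes z: "z \<in> sq_carrier X" and p: "p \<in> M0"
  shows "boundary_potential X \<sigma> \<tau> z \<le> sq_dist X z (sq_map X p) + \<sigma> * fst p + \<tau> * snd p"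
  unfolding boundary_potential_def
proof (rule cInf_lower)
  have "-2 \<le> sq_dist X z (sq_map X q) + \<sigma> * fst q + \<tau> * snd q" if "q \<in> M0" for q
    using sqms_dist_nonneg[OF X z sqms_map_in_carrier[OF X that]] M0_bounds[OF that] signs by auto
  then show "bdd_below ((\<lambda>p. sq_dist X z (sq_map X p) + \<sigma> * fst p + \<tau> * snd p) ` M0)"
    unfolding bdd_below_def by blast
qed (use p in blast)

lemma boundary_potential_ge:
  "(\<And>p. p \<in> M0 \<Longrightarrow> c \<le> sq_dist X z (sq_map X p) + \<sigma> * fst p + \<tau> * snd p) \<Longrightarrow>
    c \<le> boundary_potential X \<sigma> \<tau> z"
  unfolding boundary_potential_def using zero_in_M0 by (intro cInf_greatest) auto

lemma boundary_potential_lipschitz: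
  assumes z: "z \<in> sq_carrier X" and w: "w \<in> sq_carrier X"
  shows "boundary_potential X \<sigma> \<tau> z \<le> sq_dist X z w + boundary_potential X \<sigma> \<tau> w"
proof -
  have "boundary_potential X \<sigma> \<tau> z - sq_dist X z w \<le> boundary_potential X \<sigma> \<tau> w"
  proof (rule boundary_potential_ge)
    fix p assume p: "p \<in> M0"
    show "boundary_potential X \<sigma> \<tau> z - sq_dist X z w \<le> sq_dist X w (sq_map X p) + \<sigma> * fst p + \<tau> * snd p"
      using boundary_potential_le[OF z p] sqms_dist_triangle[OF X z w sqms_map_in_carrier[OF X p]]
      by linarith
  qed
  then show ?thesis by linarith
qed

lemma boundary_potential_map:
  assumes q: "q \<in> M0"
  shows "boundary_potential X \<sigma> \<tau> (sq_map X q) = \<sigma> * fst q + \<tau> * snd q"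
proof (rule antisym)
  show "boundary_potential X \<sigma> \<tau> (sq_map X q) \<le> \<sigma> * fst q + \<tau> * snd q"
    using boundary_potential_le[OF sqms_map_in_carrier[OF X q] q] sqms_dist_self[OF X sqms_map_in_carrier[OF X q]]
    by simp
  show "\<sigma> * fst q + \<tau> * snd q \<le> boundary_potential X \<sigma> \<tau> (sq_map X q)"
  proof (rule boundary_potential_ge)
    fix p assume p: "p \<in> M0"
    have "\<sigma> * (fst q - fst p) \<le> \<bar>fst q - fst p\<bar>" "\<tau> * (snd q - snd p) \<le> \<bar>snd q - snd p\<bar>"
      using signs by auto
    then show "\<sigma> * fst q + \<tau> * snd q \<le> sq_dist X (sq_map X q) (sq_map X p) + \<sigma> * fst p + \<tau> * snd p"
      using sqms_dist_map_lower[OF X q p] by (simp add: algebra_simps)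
  qed
qed

lemma linear_test_map:
  assumes q: "q \<in> M0"
  shows "linear_test X \<sigma> \<tau> (m, sq_map X q) = \<sigma> * fst (tens_pos m q) + \<tau> * snd (tens_pos m q)"
proof -
  have "lin_min \<sigma> \<tau> \<le> \<sigma> * fst q + \<tau> * snd q" "\<sigma> * fst q + \<tau> * snd q \<le> lin_min \<sigma> \<tau> + 2"
    using M0_bounds[OF q] signs unfolding lin_min_def by auto
  then show ?thesis unfolding linear_test_def tens_pos_def
    using boundary_potential_map[OF q] clamp_id by (simp add: algebra_simps add_divide_distrib)
qed

lemma linear_test_bounds:
  assumes z: "z \<in> Mset \<times> sq_carrier X"
  shows "lin_min \<sigma> \<tau> \<le> linear_test X \<sigma> \<tau> z \<and> linear_test X \<sigma> \<tau> z \<le> lin_min \<sigma> \<tau> + 2"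
proof -
  have "real (fst (fst z)) \<le> 2" "real (snd (fst z)) \<le> 2" using z by (auto simp: Mset_iff)
  then show ?thesis
    using signs clamp_bounds[of "lin_min \<sigma> \<tau>" "boundary_potential X \<sigma> \<tau> (snd z)"]
    unfolding linear_test_def lin_min_def by auto
qed

lemma linear_test_step:
  assumes z: "z \<in> Mset \<times> sq_carrier X" and w: "w \<in> Mset \<times> sq_carrier X"
  shows "\<bar>linear_test X \<sigma> \<tau> z - linear_test X \<sigma> \<tau> w\<bar> \<le> tens_cost X z w"
proof (cases "(z, w) \<in> tens_rel X")
  case True
  from X True show ?thesis
  proof (cases rule: tens_rel_cases)
    case (glued p q)
    then have "linear_test X \<sigma> \<tau> z = linear_test X \<sigma> \<tau> w"
      using linear_test_map[of p "fst z"] linear_test_map[of q "fst w"] by (metis prod.collapse)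
    then show ?thesis by (simp add: tens_cost_rel True)
  qed (simp add: tens_cost_rel)
next
  case unrelated: False
  show ?thesis
  proof (cases "fst z = fst w")
    case True
    have zc: "snd z \<in> sq_carrier X" and wc: "snd w \<in> sq_carrier X" using z w by auto
    have "\<bar>boundary_potential X \<sigma> \<tau> (snd z) - boundary_potential X \<sigma> \<tau> (snd w)\<bar> \<le> sq_dist X (snd z) (snd w)"
      using boundary_potential_lipschitz[OF zc wc] boundary_potential_lipschitz[OF wc zc]
        sqms_dist_commute[OF X zc wc] by linarith
    then have "\<bar>clamp (lin_min \<sigma> \<tau>) (boundary_potential X \<sigma> \<tau> (snd z))
        - clamp (lin_min \<sigma> \<tau>) (boundary_potential X \<sigma> \<tau> (snd w))\<bar> \<le> sq_dist X (snd z) (snd w)"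
      using clamp_lipschitz order_trans by blast
    moreover have "tens_cost X z w = sq_dist X (snd z) (snd w) / 3"
      using unrelated True unfolding tens_cost_def by simp
    ultimately show ?thesis unfolding linear_test_def using True by (simp add: diff_divide_distrib[symmetric])
  next
    case False
    then have "tens_cost X z w = 2" using unrelated unfolding tens_cost_def by simp
    then show ?thesis using linear_test_bounds[OF z] linear_test_bounds[OF w] by linarith
  qed
qed

lemma linear_test_lower:
  "(m, x) \<in> Mset \<times> sq_carrier X \<Longrightarrow> (n, y) \<in> Mset \<times> sq_carrier X \<Longrightarrow>
    \<bar>linear_test X \<sigma> \<tau> (m, x) - linear_test X \<sigma> \<tau> (n, y)\<bar> \<le> tens_dist X (tens_pt X m x) (tens_pt X n y)"
  by (rule tens_dist_lower_bound[where \<delta> = "\<lambda>a b. \<bar>a - b\<bar>", OF linear_test_step]) auto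

end

lemma l1_dist_as_linear:
  fixes p q :: "real \<times> real"
  obtains \<sigma> \<tau> :: real where "\<sigma> \<in> {-1, 1}" "\<tau> \<in> {-1, 1}"
    "\<bar>fst p - fst q\<bar> + \<bar>snd p - snd q\<bar> = (\<sigma> * fst p + \<tau> * snd p) - (\<sigma> * fst q + \<tau> * snd q)"
proof -
  define \<sigma> :: real where "\<sigma> = (if fst q \<le> fst p then 1 else -1)"
  define \<tau> :: real where "\<tau> = (if snd q \<le> snd p then 1 else -1)"
  have "\<bar>fst p - fst q\<bar> + \<bar>snd p - snd q\<bar> = (\<sigma> * fst p + \<tau> * snd p) - (\<sigma> * fst q + \<tau> * snd q)"
    unfolding \<sigma>_def \<tau>_def by (auto simp: algebra_simps)
  then show thesis using that[of \<sigma> \<tau>] unfolding \<sigma>_def \<tau>_def by auto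
qed

lemma tens_pos_l1_le_tens_dist:
  assumes X: "is_sqms X" and a: "(m, sq_map X p) \<in> Mset \<times> sq_carrier X" and p: "p \<in> M0"
    and b: "(n, sq_map X q) \<in> Mset \<times> sq_carrier X" and q: "q \<in> M0"
  shows "\<bar>fst (tens_pos m p) - fst (tens_pos n q)\<bar> + \<bar>snd (tens_pos m p) - snd (tens_pos n q)\<bar>
    \<le> tens_dist X (tens_pt X m (sq_map X p)) (tens_pt X n (sq_map X q))"
proof -
  obtain \<sigma> \<tau> where signs: "\<sigma> \<in> {-1, 1}" "\<tau> \<in> {-1, 1}"
    and l1: "\<bar>fst (tens_pos m p) - fst (tens_pos n q)\<bar> + \<bar>snd (tens_pos m p) - snd (tens_pos n q)\<bar>
      = (\<sigma> * fst (tens_pos m p) + \<tau> * snd (tens_pos m p)) - (\<sigma> * fst (tens_pos n q) + \<tau> * snd (tens_pos n q))"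
    by (rule l1_dist_as_linear)
  show ?thesis
    using linear_test_lower[OF X signs a b] linear_test_map[OF X signs p] linear_test_map[OF X signs q]
    unfolding l1 by simp
qed

lemma tens_dist_map_lower:
  assumes X: "is_sqms X" and p: "p \<in> M0" and q: "q \<in> M0"
  shows "\<bar>fst p - fst q\<bar> + \<bar>snd p - snd q\<bar> \<le> tens_dist X (tens_sq X p) (tens_sq X q)"
  using tens_pos_l1_le_tens_dist[OF X chosen_cell_coord_in[OF X p] cell_coord_in_M0[OF p in_chosen_cell[OF p]]
      chosen_cell_coord_in[OF X q] cell_coord_in_M0[OF q in_chosen_cell[OF q]]]
  unfolding tens_sq_eq by simp

lemma edge_dist_pos:
  fixes e :: "real \<Rightarrow> real \<times> real"
  assumes X: "is_sqms X" and x: "x \<in> sq_carrier X" and off: "x \<notin> sq_map X ` M0"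
    and edge_in: "\<And>t. t \<in> {0..1} \<Longrightarrow> e t \<in> M0"
    and edge_dist: "\<And>s t. s \<in> {0..1} \<Longrightarrow> t \<in> {0..1} \<Longrightarrow>
      sq_dist X (sq_map X (e s)) (sq_map X (e t)) = \<bar>s - t\<bar>"
  shows "\<exists>\<delta>>0. \<forall>t\<in>{0..1}. \<delta> \<le> sq_dist X x (sq_map X (e t))"
proof -
  define g where "g t = sq_dist X x (sq_map X (e t))" for t
  have on_edge: "sq_map X (e t) \<in> sq_carrier X" if "t \<in> {0..1}" for t
    using sqms_map_in_carrier[OF X edge_in[OF that]] .
  have lipschitz: "\<bar>g s - g t\<bar> \<le> \<bar>s - t\<bar>" if "s \<in> {0..1}" "t \<in> {0..1}" for s t
    using sqms_dist_triangle[OF X x on_edge[OF that(1)] on_edge[OF that(2)]]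
      sqms_dist_triangle[OF X x on_edge[OF that(2)] on_edge[OF that(1)]]
      edge_dist[OF that] edge_dist[OF that(2,1)] unfolding g_def by linarith
  have "uniformly_continuous_on {0..1} g"
    unfolding uniformly_continuous_on_def dist_real_def
  proof (intro allI impI)
    fix \<epsilon> :: real assume "0 < \<epsilon>"
    have "\<bar>g t - g s\<bar> < \<epsilon>" if "s \<in> {0..1}" "t \<in> {0..1}" "\<bar>t - s\<bar> < \<epsilon>" for s t
      using lipschitz[OF that(2,1)] that(3) by linarith
    then show "\<exists>d>0. \<forall>s\<in>{0..1}. \<forall>t\<in>{0..1}. \<bar>t - s\<bar> < d \<longrightarrow> \<bar>g t - g s\<bar> < \<epsilon>"
      using \<open>0 < \<epsilon>\<close> by blast
  qed
  then obtain t where t: "t \<in> {0..1}" and min: "\<forall>s\<in>{0..1}. g t \<le> g s"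
    using continuous_attains_inf[of "{0..1}" g] uniformly_continuous_imp_continuous by fastforce
  have "x \<noteq> sq_map X (e t)" using off edge_in[OF t] by blast
  then have "0 < g t"
    using sqms_dist_eq_0_iff[OF X x on_edge[OF t]] sqms_dist_nonneg[OF X x on_edge[OF t]]
    unfolding g_def by linarith
  then show ?thesis using min unfolding g_def by blast
qed

lemma boundary_dist_pos:
  assumes X: "is_sqms X" and x: "x \<in> sq_carrier X" and off: "x \<notin> sq_map X ` M0"
  shows "\<exists>\<delta>>0. \<forall>p\<in>M0. \<delta> \<le> sq_dist X x (sq_map X p)"
proof -
  have vertical: "\<exists>\<delta>>0. \<forall>t\<in>{0..1}. \<delta> \<le> sq_dist X x (sq_map X (i, t))" if "i \<in> {0, 1}" for i :: real
    using that sqms_vertical_edge[OF X that]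
    by (intro edge_dist_pos[OF X x off]) (auto simp: M0_iff abs_minus_commute)
  have horizontal: "\<exists>\<delta>>0. \<forall>t\<in>{0..1}. \<delta> \<le> sq_dist X x (sq_map X (t, i))" if "i \<in> {0, 1}" for i :: real
    using that sqms_horizontal_edge[OF X that]
    by (intro edge_dist_pos[OF X x off]) (auto simp: M0_iff abs_minus_commute)
  obtain d0 where d0: "d0 > 0" "\<forall>t\<in>{0..1}. d0 \<le> sq_dist X x (sq_map X (0, t))" using vertical[of 0] by auto
  obtain d1 where d1: "d1 > 0" "\<forall>t\<in>{0..1}. d1 \<le> sq_dist X x (sq_map X (1, t))" using vertical[of 1] by auto
  obtain d2 where d2: "d2 > 0" "\<forall>t\<in>{0..1}. d2 \<le> sq_dist X x (sq_map X (t, 0))" using horizontal[of 0] by auto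
  obtain d3 where d3: "d3 > 0" "\<forall>t\<in>{0..1}. d3 \<le> sq_dist X x (sq_map X (t, 1))" using horizontal[of 1] by auto
  have "min (min d0 d1) (min d2 d3) \<le> sq_dist X x (sq_map X p)" if "p \<in> M0" for p
  proof -
    obtain p1 p2 where p: "p = (p1, p2)" by (cases p)
    have "p1 \<in> {0..1}" "p2 \<in> {0..1}" and "p1 = 0 \<or> p1 = 1 \<or> p2 = 0 \<or> p2 = 1"
      using that p by (auto simp: M0_iff)
    then show ?thesis using d0(2) d1(2) d2(2) d3(2) p by (elim disjE) force+
  qed
  moreover have "0 < min (min d0 d1) (min d2 d3)" using d0 d1 d2 d3 by auto
  ultimately show ?thesis by blast
qed

text \<open>A bump of height \<open>\<delta> / 3\<close> at \<open>m \<otimes> x\<close>; it vanishes at all glued points because \<open>x\<close>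
  has distance at least \<open>\<delta>\<close> from the boundary square.\<close>

definition bump_test :: "'a sqms \<Rightarrow> 'a \<Rightarrow> real \<Rightarrow> nat \<times> nat \<Rightarrow> (nat \<times> nat) \<times> 'a \<Rightarrow> real" where
  "bump_test X x \<delta> m z = (if fst z = m then max (\<delta> / 3 - sq_dist X x (snd z) / 3) 0 else 0)"

lemma bump_test_step:
  assumes X: "is_sqms X" and x: "x \<in> sq_carrier X" and \<delta>: "0 < \<delta>" "\<forall>p\<in>M0. \<delta> \<le> sq_dist X x (sq_map X p)"
    and z: "z \<in> Mset \<times> sq_carrier X" and w: "w \<in> Mset \<times> sq_carrier X"
  shows "\<bar>bump_test X x \<delta> m z - bump_test X x \<delta> m w\<bar> \<le> tens_cost X z w"
proof (cases "(z, w) \<in> tens_rel X")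
  case True
  from X True show ?thesis
  proof (cases rule: tens_rel_cases)
    case (glued p q)
    then have "bump_test X x \<delta> m z = 0" "bump_test X x \<delta> m w = 0"
      using \<delta>(2) unfolding bump_test_def by force+
    then show ?thesis by (simp add: tens_cost_rel True)
  qed (simp add: tens_cost_rel)
next
  case unrelated: False
  have zc: "snd z \<in> sq_carrier X" and wc: "snd w \<in> sq_carrier X" using z w by auto
  show ?thesis
  proof (cases "fst z = fst w")
    case True
    have "tens_cost X z w = sq_dist X (snd z) (snd w) / 3" using unrelated True unfolding tens_cost_def by simp
    then show ?thesis unfolding bump_test_def
      using True sqms_dist_triangle[OF X x wc zc] sqms_dist_triangle[OF X x zc wc] sqms_dist_commute[OF X wc zc]
      by (auto simp: max_def)
  next
    case False
    have "\<delta> \<le> 2"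
      using \<delta>(2) zero_in_M0 sqms_dist_le_2[OF X x sqms_map_in_carrier[OF X zero_in_M0]] by force
    moreover have "tens_cost X z w = 2" using unrelated False unfolding tens_cost_def by simp
    ultimately show ?thesis using sqms_dist_nonneg[OF X x zc] sqms_dist_nonneg[OF X x wc] \<delta>(1)
      unfolding bump_test_def by (auto simp: max_def)
  qed
qed

lemma tens_pt_eq_if_dist_0_off_boundary:
  assumes X: "is_sqms X" and a: "(m, x) \<in> Mset \<times> sq_carrier X" and b: "(n, y) \<in> Mset \<times> sq_carrier X"
    and off: "x \<notin> sq_map X ` M0" and d: "tens_dist X (tens_pt X m x) (tens_pt X n y) = 0"
  shows "tens_pt X m x = tens_pt X n y"
proof -
  have x: "x \<in> sq_carrier X" using a by auto
  obtain \<delta> where \<delta>: "0 < \<delta>" "\<forall>p\<in>M0. \<delta> \<le> sq_dist X x (sq_map X p)"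
    using boundary_dist_pos[OF X x off] by blast
  have "\<bar>bump_test X x \<delta> m (m, x) - bump_test X x \<delta> m (n, y)\<bar> \<le> 0"
    using tens_dist_lower_bound[where \<delta> = "\<lambda>a b. \<bar>a - b\<bar>" and F = "bump_test X x \<delta> m",
        OF bump_test_step[OF X x \<delta>] _ a b] d by auto
  then have "bump_test X x \<delta> m (n, y) = \<delta> / 3"
    using sqms_dist_self[OF X x] \<delta>(1) unfolding bump_test_def by auto
  then have "n = m" and "sq_dist X x y \<le> 0"
    using \<delta>(1) unfolding bump_test_def by (auto simp: max_def split: if_splits)
  then show ?thesis using sqms_eq_if_dist_le_0[OF X x] b by auto
qed

lemma tens_pt_eq_if_dist_0:
  assumes X: "is_sqms X" and a: "(m, x) \<in> Mset \<times> sq_carrier X" and b: "(n, y) \<in> Mset \<times> sq_carrier X"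
    and d: "tens_dist X (tens_pt X m x) (tens_pt X n y) = 0"
  shows "tens_pt X m x = tens_pt X n y"
proof (cases "x \<in> sq_map X ` M0 \<and> y \<in> sq_map X ` M0")
  case True
  then obtain p q where p: "p \<in> M0" "x = sq_map X p" and q: "q \<in> M0" "y = sq_map X q" by blast
  have "\<bar>fst (tens_pos m p) - fst (tens_pos n q)\<bar> + \<bar>snd (tens_pos m p) - snd (tens_pos n q)\<bar> \<le> 0"
    using tens_pos_l1_le_tens_dist[of X m p n q] X a b p q d by simp
  then have "tens_pos m p = tens_pos n q" by (rule eq_if_l1_dist_le_0)
  then show ?thesis using tens_rel_if_same_pos[of m n p q X] a b p q by (simp add: tens_pt_eqI)
next
  case False
  have "tens_dist X (tens_pt X n y) (tens_pt X m x) = 0" using d tens_dist_commute[OF X a b] by simp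
  then show ?thesis
    using False tens_pt_eq_if_dist_0_off_boundary[OF X a b _ d] tens_pt_eq_if_dist_0_off_boundary[OF X b a]
    by metis
qed

section \<open>\<open>M \<otimes> X\<close> is a square metric space\<close>

lemma le_abs_diff_glue:
  fixes g :: "real \<Rightarrow> real \<Rightarrow> real"
  assumes triangle: "\<And>r s t. r \<in> {0..1} \<Longrightarrow> s \<in> {0..1} \<Longrightarrow> t \<in> {0..1} \<Longrightarrow> g r s \<le> g r t + g t s"
    and sub: "{a..c} \<subseteq> {0..1}" and b: "a \<le> b" "b \<le> c"
    and left: "\<And>r s. r \<in> {a..b} \<Longrightarrow> s \<in> {a..b} \<Longrightarrow> g r s \<le> \<bar>s - r\<bar>"
    and right: "\<And>r s. r \<in> {b..c} \<Longrightarrow> s \<in> {b..c} \<Longrightarrow> g r s \<le> \<bar>s - r\<bar>"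
    and r: "r \<in> {a..c}" and s: "s \<in> {a..c}"
  shows "g r s \<le> \<bar>s - r\<bar>"
proof -
  have split: "g r s \<le> g r b + g b s" using triangle sub r s b by auto
  show ?thesis
  proof (cases "r \<le> b"; cases "s \<le> b")
    assume "r \<le> b" "\<not> s \<le> b"
    then have "g r b \<le> b - r" "g b s \<le> s - b" "\<bar>s - r\<bar> = s - r"
      using left[of r b] right[of b s] r s b by auto
    then show ?thesis using split by linarith
  next
    assume "\<not> r \<le> b" "s \<le> b"
    then have "g r b \<le> r - b" "g b s \<le> b - s" "\<bar>s - r\<bar> = r - s"
      using right[of r b] left[of b s] r s b by auto
    then show ?thesis using split by linarith
  qed (use left right r s in auto)
qed

lemma le_abs_diff_from_thirds:
  fixes g :: "real \<Rightarrow> real \<Rightarrow> real"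
  assumes triangle: "\<And>r s t. r \<in> {0..1} \<Longrightarrow> s \<in> {0..1} \<Longrightarrow> t \<in> {0..1} \<Longrightarrow> g r s \<le> g r t + g t s"
    and thirds: "\<And>j r s. j \<in> {0, 1, 2} \<Longrightarrow> r \<in> {real j / 3..(real j + 1) / 3} \<Longrightarrow>
      s \<in> {real j / 3..(real j + 1) / 3} \<Longrightarrow> g r s \<le> \<bar>s - r\<bar>"
    and "r \<in> {0..1}" and "s \<in> {0..1}"
  shows "g r s \<le> \<bar>s - r\<bar>"
proof -
  have first_two: "g r s \<le> \<bar>s - r\<bar>" if "r \<in> {0..2/3}" "s \<in> {0..2/3}" for r s
    by (rule le_abs_diff_glue[where a = 0 and b = "1/3" and c = "2/3", OF triangle])
      (use thirds[of 0] thirds[of 1] that in auto)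
  show ?thesis
    by (rule le_abs_diff_glue[where a = 0 and b = "2/3" and c = 1, OF triangle])
      (use first_two thirds[of 2] assms(3,4) in auto)
qed

lemma tens_dist_sq_same_cell:
  assumes X: "is_sqms X" and p: "p \<in> M0" and q: "q \<in> M0" and in_p: "in_cell m p" and in_q: "in_cell m q"
  shows "tens_dist X (tens_sq X p) (tens_sq X q)
    \<le> sq_dist X (sq_map X (cell_coord m p)) (sq_map X (cell_coord m q)) / 3"
proof -
  have a: "(m, sq_map X (cell_coord m p)) \<in> Mset \<times> sq_carrier X"
    using in_cell_Mset[OF in_p] sqms_map_in_carrier[OF X cell_coord_in_M0[OF p in_p]] by auto
  have b: "(m, sq_map X (cell_coord m q)) \<in> Mset \<times> sq_carrier X"
    using in_cell_Mset[OF in_q] sqms_map_in_carrier[OF X cell_coord_in_M0[OF q in_q]] by auto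
  show ?thesis unfolding tens_sq_in_cell[OF p in_p] tens_sq_in_cell[OF q in_q]
    using tens_dist_le_cost[OF X a b] tens_cost_same_cell[OF X, of "(m, _)" "(m, _)"] a b by force
qed

lemma tens_dist_sq_triangle:
  assumes X: "is_sqms X" and "p \<in> M0" "q \<in> M0" "u \<in> M0"
  shows "tens_dist X (tens_sq X p) (tens_sq X q)
    \<le> tens_dist X (tens_sq X p) (tens_sq X u) + tens_dist X (tens_sq X u) (tens_sq X q)"
  unfolding tens_sq_eq using assms by (intro tens_dist_triangle chosen_cell_coord_in)

lemma tens_dist_sq_edge:
  assumes X: "is_sqms X" and i: "i \<in> {0, 1}" and edge: "e = (\<lambda>t. (i, t)) \<or> e = (\<lambda>t. (t, i))"
    and r: "r \<in> {0..1}" and s: "s \<in> {0..1}"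
  shows "tens_dist X (tens_sq X (e r)) (tens_sq X (e s)) = \<bar>s - r\<bar>"
proof (rule antisym)
  have e_in: "e t \<in> M0" if "t \<in> {0..1}" for t
    using edge i that by (auto simp: M0_iff)
  have e_dist: "sq_dist X (sq_map X (e u)) (sq_map X (e v)) = \<bar>v - u\<bar>" if "u \<in> {0..1}" "v \<in> {0..1}" for u v
    using edge sqms_vertical_edge[OF X i that] sqms_horizontal_edge[OF X i that] by auto
  define k :: nat where "k = (if i = 0 then 0 else 2)"
  define cell where "cell j = (if e = (\<lambda>t. (i, t)) then (k, j) else (j, k))" for j
  have cell: "in_cell (cell j) (e a) \<and> cell_coord (cell j) (e a) = e (3 * a - real j)"
    if "j \<in> {0, 1, 2}" "a \<in> {real j / 3..(real j + 1) / 3}" for j a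
  proof -
    have "3 * i - real k = i" "cell j \<in> Mset" using i that(1) edge unfolding k_def cell_def Mset_iff by auto
    then show ?thesis using that edge i unfolding in_cell_def cell_coord_def cell_def by auto
  qed
  show "tens_dist X (tens_sq X (e r)) (tens_sq X (e s)) \<le> \<bar>s - r\<bar>"
  proof (rule le_abs_diff_from_thirds[where g = "\<lambda>r s. tens_dist X (tens_sq X (e r)) (tens_sq X (e s))", OF _ _ r s])
    fix a b t :: real assume "a \<in> {0..1}" "b \<in> {0..1}" "t \<in> {0..1}"
    then show "tens_dist X (tens_sq X (e a)) (tens_sq X (e b))
      \<le> tens_dist X (tens_sq X (e a)) (tens_sq X (e t)) + tens_dist X (tens_sq X (e t)) (tens_sq X (e b))"
      using tens_dist_sq_triangle[OF X e_in e_in e_in] by blast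
  next
    fix j :: nat and a b :: real
    assume j: "j \<in> {0, 1, 2}" and a: "a \<in> {real j / 3..(real j + 1) / 3}" and b: "b \<in> {real j / 3..(real j + 1) / 3}"
    have ab: "a \<in> {0..1}" "b \<in> {0..1}" "3 * a - real j \<in> {0..1}" "3 * b - real j \<in> {0..1}"
      using j a b by auto
    have "tens_dist X (tens_sq X (e a)) (tens_sq X (e b))
        \<le> sq_dist X (sq_map X (e (3 * a - real j))) (sq_map X (e (3 * b - real j))) / 3"
      using tens_dist_sq_same_cell[OF X e_in[OF ab(1)] e_in[OF ab(2)]] cell[OF j a] cell[OF j b] by metis
    also have "\<dots> = \<bar>3 * b - 3 * a\<bar> / 3" using e_dist[OF ab(3,4)] by simp
    also have "\<dots> = \<bar>b - a\<bar>" by (simp add: abs_real_def)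
    finally show "tens_dist X (tens_sq X (e a)) (tens_sq X (e b)) \<le> \<bar>b - a\<bar>" .
  qed
  have "\<bar>fst (e r) - fst (e s)\<bar> + \<bar>snd (e r) - snd (e s)\<bar> = \<bar>s - r\<bar>" using edge by auto
  then show "\<bar>s - r\<bar> \<le> tens_dist X (tens_sq X (e r)) (tens_sq X (e s))"
    using tens_dist_map_lower[OF X e_in[OF r] e_in[OF s]] by simp
qed

theorem is_sqms_tens:
  assumes X: "is_sqms X"
  shows "is_sqms (tens X)"
proof (rule is_sqmsI, goal_cases)
  case (1 P Q)
  then show ?case by (auto elim!: tens_carrierE intro: tens_dist_nonneg[OF X])
next
  case (2 P Q)
  then show ?case by (auto elim!: tens_carrierE intro: tens_dist_le_2[OF X])
next
  case (3 P Q)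
  then obtain m x n y where P: "P = tens_pt X m x" and mx: "(m, x) \<in> Mset \<times> sq_carrier X"
    and Q: "Q = tens_pt X n y" and ny: "(n, y) \<in> Mset \<times> sq_carrier X"
    by (metis tens_carrierE tens_simps(1))
  show ?case unfolding P Q tens_simps
  proof
    assume "tens_dist X (tens_pt X m x) (tens_pt X n y) = 0"
    then show "tens_pt X m x = tens_pt X n y" by (rule tens_pt_eq_if_dist_0[OF X mx ny])
  qed (metis tens_dist_self[OF X mx])
next
  case (4 P Q)
  then show ?case by (auto elim!: tens_carrierE intro: tens_dist_commute[OF X])
next
  case (5 P Q R)
  then show ?case by (auto elim!: tens_carrierE intro: tens_dist_triangle[OF X])
next
  case (6 p)
  then show ?case unfolding tens_simps tens_sq_eq by (intro tens_carrierI chosen_cell_coord_in[OF X])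
next
  case (7 i r s)
  then show ?case using tens_dist_sq_edge[OF X, of i "\<lambda>t. (i, t)"] by simp
next
  case (8 i r s)
  then show ?case using tens_dist_sq_edge[OF X, of i "\<lambda>t. (t, i)"] by simp
next
  case (9 p q)
  then show ?case using tens_dist_map_lower[OF X] by simp
qed

section \<open>The functor \<open>M \<otimes> -\<close> on morphisms\<close>

lemma tens_gen_map:
  assumes S: "\<forall>p\<in>M0. f (sq_map X p) = sq_map Y p" and gen: "(z, w) \<in> tens_gen X"
  shows "((fst z, f (snd z)), (fst w, f (snd w))) \<in> tens_gen Y"
proof -
  obtain m n p q where "z = (m, sq_map X p)" "w = (n, sq_map X q)" "m \<in> Mset" "n \<in> Mset" "adjacent m n"
      "p \<in> M0" "q \<in> M0" "(real (fst m) + fst p) / 3 = (real (fst n) + fst q) / 3"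
      "(real (snd m) + snd p) / 3 = (real (snd n) + snd q) / 3"
    using gen unfolding tens_gen_def by blast
  then show ?thesis using S unfolding tens_gen_def by fastforce
qed

lemma tens_rel_map:
  assumes S: "\<forall>p\<in>M0. f (sq_map X p) = sq_map Y p" and rel: "(z, w) \<in> tens_rel X"
  shows "((fst z, f (snd z)), (fst w, f (snd w))) \<in> tens_rel Y"
  using rel unfolding tens_rel_def
proof (induction rule: rtrancl_induct)
  case (step u v)
  then have "((fst u, f (snd u)), (fst v, f (snd v))) \<in> tens_gen Y \<union> (tens_gen Y)\<inverse>"
    using tens_gen_map[OF S] by blast
  with step(3) show ?case by (rule rtrancl.rtrancl_into_rtrancl)
qed simp

lemma tens_map_pt:
  assumes S: "\<forall>p\<in>M0. f (sq_map X p) = sq_map Y p" and mx: "(m, x) \<in> Mset \<times> sq_carrier X"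
  shows "tens_map X Y f (tens_pt X m x) = tens_pt Y m (f x)"
proof -
  let ?z = "SOME z. z \<in> tens_pt X m x \<and> z \<in> Mset \<times> sq_carrier X"
  have "?z \<in> tens_pt X m x" by (rule someI2[of _ "(m, x)"]) (use mx tens_pt_self[of m x X] in auto)
  then have "((m, f x), (fst ?z, f (snd ?z))) \<in> tens_rel Y"
    using tens_rel_map[OF S] by (fastforce simp: mem_tens_pt)
  then show ?thesis unfolding tens_map_def Let_def by (simp add: tens_pt_eqI)
qed

lemma tens_map_sq:
  assumes X: "is_sqms X" and S: "\<forall>p\<in>M0. f (sq_map X p) = sq_map Y p" and p: "p \<in> M0"
  shows "tens_map X Y f (tens_sq X p) = tens_sq Y p"
  unfolding tens_sq_eq[of X] tens_sq_eq[of Y]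
  using tens_map_pt[OF S chosen_cell_coord_in[OF X p]] S cell_coord_in_M0[OF p in_chosen_cell[OF p]] by simp

lemma tens_dist_map_le:
  assumes X: "is_sqms X" and Y: "is_sqms Y" and f: "sq_hom X Y f"
    and a: "(m, x) \<in> Mset \<times> sq_carrier X" and b: "(n, y) \<in> Mset \<times> sq_carrier X"
  shows "tens_dist Y (tens_pt Y m (f x)) (tens_pt Y n (f y)) \<le> tens_dist X (tens_pt X m x) (tens_pt X n y)"
proof -
  have S: "\<forall>p\<in>M0. f (sq_map X p) = sq_map Y p" using sq_homD(3)[OF f] by blast
  define F where "F z = tens_pt Y (fst z) (f (snd z))" for z
  have F_in: "(fst z, f (snd z)) \<in> Mset \<times> sq_carrier Y" if "z \<in> Mset \<times> sq_carrier X" for z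
    using that sq_homD(1)[OF f] by auto
  have step: "tens_dist Y (F z) (F w) \<le> tens_cost X z w"
    if z: "z \<in> Mset \<times> sq_carrier X" and w: "w \<in> Mset \<times> sq_carrier X" for z w
  proof (cases "(z, w) \<in> tens_rel X")
    case True
    then have "F z = F w" unfolding F_def using tens_pt_eqI[OF tens_rel_map[OF S True]] by simp
    then show ?thesis using tens_dist_self[OF Y F_in[OF z]] tens_cost_rel[OF True] unfolding F_def by simp
  next
    case unrelated: False
    show ?thesis
    proof (cases "fst z = fst w")
      case True
      have "tens_dist Y (F z) (F w) \<le> tens_cost Y (fst z, f (snd z)) (fst w, f (snd w))"
        unfolding F_def using tens_dist_le_cost[OF Y F_in[OF z] F_in[OF w]] by simp
      also have "\<dots> \<le> sq_dist Y (f (snd z)) (f (snd w)) / 3"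
        using tens_cost_same_cell[OF Y, of "(fst z, f (snd z))" "(fst w, f (snd w))"] F_in[OF z] F_in[OF w] True
        by auto
      also have "\<dots> \<le> sq_dist X (snd z) (snd w) / 3" using sq_homD(2)[OF f, of "snd z" "snd w"] z w by auto
      also have "\<dots> = tens_cost X z w" using unrelated True unfolding tens_cost_def by simp
      finally show ?thesis .
    next
      case False
      then have "tens_cost X z w = 2" using unrelated unfolding tens_cost_def by simp
      then show ?thesis unfolding F_def using tens_dist_le_2[OF Y F_in[OF z] F_in[OF w]] by simp
    qed
  qed
  have triangle: "tens_dist Y (F z) (F u) \<le> tens_dist Y (F z) (F w) + tens_dist Y (F w) (F u)"
    if "z \<in> Mset \<times> sq_carrier X" "w \<in> Mset \<times> sq_carrier X" "u \<in> Mset \<times> sq_carrier X" for z w u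
    unfolding F_def using that by (intro tens_dist_triangle[OF Y] F_in)
  show ?thesis using tens_dist_lower_bound[where \<delta> = "tens_dist Y", OF step triangle a b]
    unfolding F_def by simp
qed

lemma sq_hom_tens_map:
  assumes X: "is_sqms X" and Y: "is_sqms Y" and f: "sq_hom X Y f"
  shows "sq_hom (tens X) (tens Y) (tens_map X Y f)"
proof -
  have S: "\<forall>p\<in>M0. f (sq_map X p) = sq_map Y p" using sq_homD(3)[OF f] by blast
  show ?thesis unfolding sq_hom_def tens_simps
  proof (intro conjI ballI subsetI)
    fix Q assume "Q \<in> tens_map X Y f ` tens_carrier X"
    then obtain m x where "Q = tens_map X Y f (tens_pt X m x)" "(m, x) \<in> Mset \<times> sq_carrier X"
      by (auto elim: tens_carrierE)
    then show "Q \<in> tens_carrier Y" using tens_map_pt[OF S] sq_homD(1)[OF f] by (auto intro!: tens_carrierI)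
  next
    fix P Q assume "P \<in> tens_carrier X" "Q \<in> tens_carrier X"
    then show "tens_dist Y (tens_map X Y f P) (tens_map X Y f Q) \<le> tens_dist X P Q"
      by (auto elim!: tens_carrierE simp: tens_map_pt[OF S] intro: tens_dist_map_le[OF X Y f])
  next
    fix p assume "p \<in> M0"
    then show "tens_map X Y f (tens_sq X p) = tens_sq Y p" by (rule tens_map_sq[OF X S])
  qed
qed

section \<open>An explicit colimit of an \<open>\<omega>\<close>-chain\<close>

definition chain_union :: "(nat \<Rightarrow> 'a sqms) \<Rightarrow> (nat \<times> 'a) set" where
  "chain_union A = {(k, x). x \<in> sq_carrier (A k)}"

definition dist_at :: "(nat \<Rightarrow> 'a sqms) \<Rightarrow> (nat \<Rightarrow> nat \<Rightarrow> 'a \<Rightarrow> 'a) \<Rightarrow> nat \<Rightarrow> nat \<times> 'a \<Rightarrow> nat \<times> 'a \<Rightarrow> real" where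
  "dist_at A a j z w = sq_dist (A j) (a (fst z) j (snd z)) (a (fst w) j (snd w))"

definition chain_dist :: "(nat \<Rightarrow> 'a sqms) \<Rightarrow> (nat \<Rightarrow> nat \<Rightarrow> 'a \<Rightarrow> 'a) \<Rightarrow> nat \<times> 'a \<Rightarrow> nat \<times> 'a \<Rightarrow> real" where
  "chain_dist A a z w = Inf ((\<lambda>j. dist_at A a j z w) ` {j. fst z \<le> j \<and> fst w \<le> j})"

text \<open>The colimit is the metric quotient of \<open>chain_dist\<close>; choosing a representative of each class
  makes its carrier a subset of \<open>nat \<times> 'a\<close>.\<close>

definition chain_rep :: "(nat \<Rightarrow> 'a sqms) \<Rightarrow> (nat \<Rightarrow> nat \<Rightarrow> 'a \<Rightarrow> 'a) \<Rightarrow> nat \<times> 'a \<Rightarrow> nat \<times> 'a" where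
  "chain_rep A a z = (SOME w. w \<in> chain_union A \<and> chain_dist A a z w = 0)"

definition chain_colim :: "(nat \<Rightarrow> 'a sqms) \<Rightarrow> (nat \<Rightarrow> nat \<Rightarrow> 'a \<Rightarrow> 'a) \<Rightarrow> (nat \<times> 'a) sqms" where
  "chain_colim A a = \<lparr>sq_carrier = chain_rep A a ` chain_union A, sq_dist = chain_dist A a,
     sq_map = (\<lambda>p. chain_rep A a (0, sq_map (A 0) p))\<rparr>"

lemma chain_colim_simps [simp]:
  "sq_carrier (chain_colim A a) = chain_rep A a ` chain_union A"
  "sq_dist (chain_colim A a) = chain_dist A a"
  "sq_map (chain_colim A a) = (\<lambda>p. chain_rep A a (0, sq_map (A 0) p))"
  unfolding chain_colim_def by simp_all

lemma mem_chain_union [simp]: "(k, x) \<in> chain_union A \<longleftrightarrow> x \<in> sq_carrier (A k)"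
  unfolding chain_union_def by simp

locale sqms_chain =
  fixes A :: "nat \<Rightarrow> 'a sqms" and a :: "nat \<Rightarrow> nat \<Rightarrow> 'a \<Rightarrow> 'a"
  assumes chain: "sq_chain A a"
begin

lemma is_sqms_stage: "is_sqms (A k)"
  using chain unfolding sq_chain_def by blast

lemma sq_hom_connecting: "k \<le> l \<Longrightarrow> sq_hom (A k) (A l) (a k l)"
  using chain unfolding sq_chain_def by blast

lemma connecting_id: "x \<in> sq_carrier (A k) \<Longrightarrow> a k k x = x"
  using chain unfolding sq_chain_def by blast

lemma connecting_comp: "k \<le> l \<Longrightarrow> l \<le> m \<Longrightarrow> x \<in> sq_carrier (A k) \<Longrightarrow> a l m (a k l x) = a k m x"
  using chain unfolding sq_chain_def by blast

lemma connecting_in: "k \<le> l \<Longrightarrow> x \<in> sq_carrier (A k) \<Longrightarrow> a k l x \<in> sq_carrier (A l)"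
  using sq_homD(1)[OF sq_hom_connecting] by blast

lemma connecting_map: "k \<le> l \<Longrightarrow> p \<in> M0 \<Longrightarrow> a k l (sq_map (A k) p) = sq_map (A l) p"
  using sq_homD(3)[OF sq_hom_connecting] by blast

lemma union_connecting_in: "z \<in> chain_union A \<Longrightarrow> fst z \<le> j \<Longrightarrow> a (fst z) j (snd z) \<in> sq_carrier (A j)"
  using connecting_in by (cases z) auto

lemma dist_at_nonneg:
  "z \<in> chain_union A \<Longrightarrow> w \<in> chain_union A \<Longrightarrow> fst z \<le> j \<Longrightarrow> fst w \<le> j \<Longrightarrow> 0 \<le> dist_at A a j z w"
  unfolding dist_at_def using sqms_dist_nonneg[OF is_sqms_stage union_connecting_in union_connecting_in] .

lemma dist_at_le_2:
  "z \<in> chain_union A \<Longrightarrow> w \<in> chain_union A \<Longrightarrow> fst z \<le> j \<Longrightarrow> fst w \<le> j \<Longrightarrow> dist_at A a j z w \<le> 2"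
  unfolding dist_at_def using sqms_dist_le_2[OF is_sqms_stage union_connecting_in union_connecting_in] .

lemma dist_at_commute:
  "z \<in> chain_union A \<Longrightarrow> w \<in> chain_union A \<Longrightarrow> fst z \<le> j \<Longrightarrow> fst w \<le> j \<Longrightarrow>
    dist_at A a j z w = dist_at A a j w z"
  unfolding dist_at_def using sqms_dist_commute[OF is_sqms_stage union_connecting_in union_connecting_in] .

lemma dist_at_triangle:
  "z \<in> chain_union A \<Longrightarrow> w \<in> chain_union A \<Longrightarrow> u \<in> chain_union A \<Longrightarrow>
    fst z \<le> j \<Longrightarrow> fst w \<le> j \<Longrightarrow> fst u \<le> j \<Longrightarrow> dist_at A a j z u \<le> dist_at A a j z w + dist_at A a j w u"
  unfolding dist_at_def
  using sqms_dist_triangle[OF is_sqms_stage union_connecting_in union_connecting_in union_connecting_in] .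

lemma dist_at_antimono:
  assumes z: "z \<in> chain_union A" and w: "w \<in> chain_union A" and j: "fst z \<le> j" "fst w \<le> j" and "j \<le> j'"
  shows "dist_at A a j' z w \<le> dist_at A a j z w"
proof -
  have "a (fst z) j' (snd z) = a j j' (a (fst z) j (snd z))" "a (fst w) j' (snd w) = a j j' (a (fst w) j (snd w))"
    using connecting_comp[OF j(1) \<open>j \<le> j'\<close>] connecting_comp[OF j(2) \<open>j \<le> j'\<close>] z w
    by (cases z, cases w, auto)+
  then show ?thesis unfolding dist_at_def
    using sq_homD(2)[OF sq_hom_connecting[OF \<open>j \<le> j'\<close>] union_connecting_in[OF z j(1)] union_connecting_in[OF w j(2)]]
    by simp
qed

lemma chain_dist_le:
  "z \<in> chain_union A \<Longrightarrow> w \<in> chain_union A \<Longrightarrow> fst z \<le> j \<Longrightarrow> fst w \<le> j \<Longrightarrow> chain_dist A a z w \<le> dist_at A a j z w"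
  unfolding chain_dist_def by (rule cInf_lower) (auto simp: bdd_below_def intro!: exI[of _ 0] dist_at_nonneg)

lemma chain_dist_ge:
  "(\<And>j. fst z \<le> j \<Longrightarrow> fst w \<le> j \<Longrightarrow> c \<le> dist_at A a j z w) \<Longrightarrow> c \<le> chain_dist A a z w"
  unfolding chain_dist_def by (rule cInf_greatest) (auto intro: exI[of _ "max (fst z) (fst w)"])

lemma chain_dist_nonneg: "z \<in> chain_union A \<Longrightarrow> w \<in> chain_union A \<Longrightarrow> 0 \<le> chain_dist A a z w"
  by (rule chain_dist_ge) (rule dist_at_nonneg)

lemma chain_dist_le_2: "z \<in> chain_union A \<Longrightarrow> w \<in> chain_union A \<Longrightarrow> chain_dist A a z w \<le> 2"
  using chain_dist_le[of z w "max (fst z) (fst w)"] dist_at_le_2[of z w "max (fst z) (fst w)"] by auto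

lemma chain_dist_commute: "z \<in> chain_union A \<Longrightarrow> w \<in> chain_union A \<Longrightarrow> chain_dist A a z w = chain_dist A a w z"
  unfolding chain_dist_def using dist_at_commute by (intro arg_cong[where f = Inf] image_cong) auto

lemma chain_dist_self: "z \<in> chain_union A \<Longrightarrow> chain_dist A a z z = 0"
  using chain_dist_le[of z z "fst z"] chain_dist_nonneg[of z z]
    sqms_dist_self[OF is_sqms_stage union_connecting_in[of z "fst z"]]
  unfolding dist_at_def by auto

lemma chain_dist_approx:
  assumes "0 < \<epsilon>"
  shows "\<exists>j. fst z \<le> j \<and> fst w \<le> j \<and> dist_at A a j z w < chain_dist A a z w + \<epsilon>"
proof (rule ccontr)
  assume "\<not> ?thesis"
  then have "chain_dist A a z w + \<epsilon> \<le> chain_dist A a z w" by (intro chain_dist_ge) (auto simp: not_less)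
  then show False using assms by simp
qed

lemma chain_dist_triangle:
  assumes z: "z \<in> chain_union A" and w: "w \<in> chain_union A" and u: "u \<in> chain_union A"
  shows "chain_dist A a z u \<le> chain_dist A a z w + chain_dist A a w u"
proof (rule field_le_epsilon)
  fix e :: real assume "0 < e"
  then obtain j1 j2 where j1: "fst z \<le> j1" "fst w \<le> j1" "dist_at A a j1 z w < chain_dist A a z w + e / 2"
    and j2: "fst w \<le> j2" "fst u \<le> j2" "dist_at A a j2 w u < chain_dist A a w u + e / 2"
    using chain_dist_approx[of "e / 2"] by (meson half_gt_zero)
  define j where "j = max j1 j2"
  have "chain_dist A a z u \<le> dist_at A a j z u" using j1 j2 unfolding j_def by (intro chain_dist_le[OF z u]) auto
  also have "\<dots> \<le> dist_at A a j z w + dist_at A a j w u"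
    using j1 j2 unfolding j_def by (intro dist_at_triangle[OF z w u]) auto
  also have "dist_at A a j z w \<le> dist_at A a j1 z w" using j1 unfolding j_def by (intro dist_at_antimono[OF z w]) auto
  also have "dist_at A a j w u \<le> dist_at A a j2 w u" using j2 unfolding j_def by (intro dist_at_antimono[OF w u]) auto
  finally show "chain_dist A a z u \<le> chain_dist A a z w + chain_dist A a w u + e" using j1(3) j2(3) by linarith
qed

lemma chain_rep: assumes "z \<in> chain_union A" shows "chain_rep A a z \<in> chain_union A \<and> chain_dist A a z (chain_rep A a z) = 0"
  unfolding chain_rep_def by (rule someI[of _ z]) (use assms chain_dist_self in auto)

lemma chain_colim_carrier_subset: "sq_carrier (chain_colim A a) \<subseteq> chain_union A"
  using chain_rep by auto

lemma chain_rep_eqI: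
  assumes z: "z \<in> chain_union A" and w: "w \<in> chain_union A" and "chain_dist A a z w = 0"
  shows "chain_rep A a z = chain_rep A a w"
proof -
  have "chain_dist A a z v = 0 \<longleftrightarrow> chain_dist A a w v = 0" if "v \<in> chain_union A" for v
    using chain_dist_triangle[OF z w that] chain_dist_triangle[OF w z that] chain_dist_commute[OF z w]
      chain_dist_nonneg[OF z that] chain_dist_nonneg[OF w that] \<open>chain_dist A a z w = 0\<close> by auto
  then show ?thesis unfolding chain_rep_def by metis
qed

lemma chain_dist_rep:
  assumes z: "z \<in> chain_union A" and w: "w \<in> chain_union A"
  shows "chain_dist A a (chain_rep A a z) (chain_rep A a w) = chain_dist A a z w"
proof -
  have rz: "chain_rep A a z \<in> chain_union A" "chain_dist A a z (chain_rep A a z) = 0" using chain_rep[OF z] by auto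
  have rw: "chain_rep A a w \<in> chain_union A" "chain_dist A a w (chain_rep A a w) = 0" using chain_rep[OF w] by auto
  show ?thesis
    using chain_dist_triangle[OF rz(1) z rw(1)] chain_dist_triangle[OF z w rw(1)]
      chain_dist_triangle[OF z rz(1) w] chain_dist_triangle[OF rz(1) rw(1) w]
      chain_dist_commute[OF rz(1) z] chain_dist_commute[OF rw(1) w] rz(2) rw(2) by linarith
qed

lemma chain_rep_idem: "z \<in> chain_union A \<Longrightarrow> chain_rep A a (chain_rep A a z) = chain_rep A a z"
  using chain_rep_eqI[of "chain_rep A a z" z] chain_rep[of z] chain_dist_commute[of z "chain_rep A a z"] by auto

lemma map_in_chain_union: "p \<in> M0 \<Longrightarrow> (k, sq_map (A k) p) \<in> chain_union A"
  using sqms_map_in_carrier[OF is_sqms_stage] by simp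

lemma dist_at_map:
  "p \<in> M0 \<Longrightarrow> q \<in> M0 \<Longrightarrow> dist_at A a j (0, sq_map (A 0) p) (0, sq_map (A 0) q) = sq_dist (A j) (sq_map (A j) p) (sq_map (A j) q)"
  unfolding dist_at_def by (simp add: connecting_map)

lemma chain_dist_map_eq:
  assumes p: "p \<in> M0" and q: "q \<in> M0" and const: "\<And>j. sq_dist (A j) (sq_map (A j) p) (sq_map (A j) q) = c"
  shows "chain_dist A a (0, sq_map (A 0) p) (0, sq_map (A 0) q) = c"
proof (rule antisym)
  show "chain_dist A a (0, sq_map (A 0) p) (0, sq_map (A 0) q) \<le> c"
    using chain_dist_le[OF map_in_chain_union[OF p, of 0] map_in_chain_union[OF q, of 0], of 0]
      dist_at_map[OF p q, of 0] const[of 0] by simp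
qed (simp add: chain_dist_ge dist_at_map[OF p q] const)

theorem is_sqms_chain_colim: "is_sqms (chain_colim A a)"
proof (rule is_sqmsI, goal_cases)
  case (1 P Q)
  then show ?case using chain_dist_nonneg chain_colim_carrier_subset by (simp only: chain_colim_simps(2)) blast
next
  case (2 P Q)
  then show ?case using chain_dist_le_2 chain_colim_carrier_subset by (simp only: chain_colim_simps(2)) blast
next
  case (3 P Q)
  then obtain z w where z: "z \<in> chain_union A" "P = chain_rep A a z" and w: "w \<in> chain_union A" "Q = chain_rep A a w"
    by auto
  show ?case
  proof
    assume "sq_dist (chain_colim A a) P Q = 0"
    then show "P = Q" using chain_rep_eqI[of P Q] chain_rep z w chain_rep_idem by auto
  qed (use chain_dist_self[OF conjunct1[OF chain_rep[OF z(1)]]] z in auto)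
next
  case (5 P Q R)
  then obtain z w u where "z \<in> chain_union A" "w \<in> chain_union A" "u \<in> chain_union A"
    and "P = chain_rep A a z" "Q = chain_rep A a w" "R = chain_rep A a u" by auto
  then show ?case using chain_dist_triangle[of z w u] chain_dist_rep by simp
next
  case (4 P Q)
  then show ?case using chain_dist_commute chain_colim_carrier_subset by (simp only: chain_colim_simps(2)) blast
next
  case (6 p)
  then show ?case unfolding chain_colim_simps by (intro imageI map_in_chain_union)
next
  case (7 i r s)
  then show ?case
    using chain_dist_map_eq[OF vertical_edge_in_M0 vertical_edge_in_M0] sqms_vertical_edge[OF is_sqms_stage]
      chain_dist_rep[OF map_in_chain_union map_in_chain_union] vertical_edge_in_M0 by simp
next
  case (8 i r s)
  then show ?case
    using chain_dist_map_eq[OF horizontal_edge_in_M0 horizontal_edge_in_M0] sqms_horizontal_edge[OF is_sqms_stage]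
      chain_dist_rep[OF map_in_chain_union map_in_chain_union] horizontal_edge_in_M0 by simp
next
  case (9 p q)
  then show ?case
    using chain_dist_ge[of "(0, sq_map (A 0) p)" "(0, sq_map (A 0) q)"]
      dist_at_map sqms_dist_map_lower[OF is_sqms_stage] chain_dist_rep[OF map_in_chain_union map_in_chain_union]
    by simp
qed

theorem sq_cocone_chain_colim: "sq_cocone A a (chain_colim A a) (\<lambda>k x. chain_rep A a (k, x))"
  unfolding sq_cocone_def
proof (intro conjI allI impI ballI)
  fix k
  show "sq_hom (A k) (chain_colim A a) (\<lambda>x. chain_rep A a (k, x))" unfolding sq_hom_def chain_colim_simps
  proof (intro conjI ballI subsetI)
    fix x y assume x: "x \<in> sq_carrier (A k)" and y: "y \<in> sq_carrier (A k)"
    have "chain_dist A a (chain_rep A a (k, x)) (chain_rep A a (k, y)) = chain_dist A a (k, x) (k, y)"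
      using chain_dist_rep x y by simp
    also have "\<dots> \<le> dist_at A a k (k, x) (k, y)" using x y by (intro chain_dist_le) auto
    also have "\<dots> = sq_dist (A k) x y" unfolding dist_at_def using connecting_id x y by simp
    finally show "chain_dist A a (chain_rep A a (k, x)) (chain_rep A a (k, y)) \<le> sq_dist (A k) x y" .
  next
    fix p assume p: "p \<in> M0"
    have "dist_at A a k (k, sq_map (A k) p) (0, sq_map (A 0) p) = 0"
      unfolding dist_at_def using connecting_id[OF sqms_map_in_carrier[OF is_sqms_stage p]] connecting_map[OF _ p]
        sqms_dist_self[OF is_sqms_stage sqms_map_in_carrier[OF is_sqms_stage p]] by simp
    then have "chain_dist A a (k, sq_map (A k) p) (0, sq_map (A 0) p) = 0"
      using chain_dist_le[of "(k, sq_map (A k) p)" "(0, sq_map (A 0) p)" k]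
        chain_dist_nonneg map_in_chain_union[OF p] by (metis antisym fst_conv le0 order_refl)
    then show "chain_rep A a (k, sq_map (A k) p) = chain_rep A a (0, sq_map (A 0) p)"
      by (rule chain_rep_eqI[OF map_in_chain_union[OF p] map_in_chain_union[OF p]])
  qed auto
next
  fix k l x assume kl: "k \<le> l" and x: "x \<in> sq_carrier (A k)"
  have ax: "a k l x \<in> sq_carrier (A l)" by (rule connecting_in[OF kl x])
  have "dist_at A a l (l, a k l x) (k, x) = 0"
    unfolding dist_at_def using connecting_id[OF ax] sqms_dist_self[OF is_sqms_stage ax] by simp
  then have "chain_dist A a (l, a k l x) (k, x) = 0"
    using chain_dist_le[of "(l, a k l x)" "(k, x)" l] chain_dist_nonneg[of "(l, a k l x)" "(k, x)"] ax x kl by force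
  then show "chain_rep A a (l, a k l x) = chain_rep A a (k, x)" using chain_rep_eqI ax x by auto
qed (rule is_sqms_chain_colim)

end

definition interval_prod :: "'x sqms \<Rightarrow> ('x \<times> real) sqms" where
  "interval_prod X = \<lparr>sq_carrier = sq_carrier X \<times> {0..2},
     sq_dist = (\<lambda>u v. max (sq_dist X (fst u) (fst v)) \<bar>snd u - snd v\<bar>), sq_map = (\<lambda>p. (sq_map X p, 0))\<rparr>"

lemma interval_prod_simps [simp]:
  "sq_carrier (interval_prod X) = sq_carrier X \<times> {0..2}"
  "sq_dist (interval_prod X) = (\<lambda>u v. max (sq_dist X (fst u) (fst v)) \<bar>snd u - snd v\<bar>)"
  "sq_map (interval_prod X) = (\<lambda>p. (sq_map X p, 0))"
  unfolding interval_prod_def by simp_all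

lemma is_sqms_interval_prod:
  assumes X: "is_sqms X"
  shows "is_sqms (interval_prod X)"
proof (rule is_sqmsI, goal_cases)
  case (3 u v)
  then show ?case
    using sqms_dist_eq_0_iff[OF X, of "fst u" "fst v"] sqms_dist_nonneg[OF X, of "fst u" "fst v"]
    by (auto simp: prod_eq_iff max_def)
next
  case (5 u v w)
  then show ?case using sqms_dist_triangle[OF X] sqms_dist_nonneg[OF X] by (fastforce simp: max_def)
next
  case (7 i r s)
  then show ?case
    using sqms_vertical_edge[OF X] sqms_dist_nonneg[OF X sqms_map_in_carrier[OF X] sqms_map_in_carrier[OF X]]
      vertical_edge_in_M0 by simp
next
  case (8 i r s)
  then show ?case
    using sqms_horizontal_edge[OF X] sqms_dist_nonneg[OF X sqms_map_in_carrier[OF X] sqms_map_in_carrier[OF X]]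
      horizontal_edge_in_M0 by simp
next
  case (9 p q)
  then show ?case
    using sqms_dist_map_lower[OF X] sqms_dist_nonneg[OF X sqms_map_in_carrier[OF X] sqms_map_in_carrier[OF X]]
    by simp
qed (use sqms_dist_nonneg[OF X] sqms_dist_le_2[OF X] sqms_dist_commute[OF X] sqms_map_in_carrier[OF X] in auto)

lemma sq_hom_interval_prod:
  assumes f: "sq_hom Z X f"
    and \<psi>_bounds: "\<And>z. z \<in> sq_carrier Z \<Longrightarrow> \<psi> z \<in> {0..2}"
    and \<psi>_lipschitz: "\<And>z w. z \<in> sq_carrier Z \<Longrightarrow> w \<in> sq_carrier Z \<Longrightarrow> \<bar>\<psi> z - \<psi> w\<bar> \<le> sq_dist Z z w"
    and \<psi>_map: "\<And>p. p \<in> M0 \<Longrightarrow> \<psi> (sq_map Z p) = 0"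
  shows "sq_hom Z (interval_prod X) (\<lambda>z. (f z, \<psi> z))"
  unfolding sq_hom_def interval_prod_simps using sq_homD[OF f] assms by auto

definition transport :: "('x \<Rightarrow> 'y) \<Rightarrow> 'x sqms \<Rightarrow> 'y sqms" where
  "transport e X = \<lparr>sq_carrier = e ` sq_carrier X,
     sq_dist = (\<lambda>u v. sq_dist X (inv_into (sq_carrier X) e u) (inv_into (sq_carrier X) e v)),
     sq_map = (\<lambda>p. e (sq_map X p))\<rparr>"

lemma transport_simps [simp]:
  "sq_carrier (transport e X) = e ` sq_carrier X"
  "sq_dist (transport e X) = (\<lambda>u v. sq_dist X (inv_into (sq_carrier X) e u) (inv_into (sq_carrier X) e v))"
  "sq_map (transport e X) = (\<lambda>p. e (sq_map X p))"
  unfolding transport_def by simp_all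

lemma is_sqms_transport:
  assumes X: "is_sqms X" and e: "inj_on e (sq_carrier X)"
  shows "is_sqms (transport e X)"
proof -
  have inv: "inv_into (sq_carrier X) e (e x) = x" if "x \<in> sq_carrier X" for x
    using inv_into_f_f[OF e that] .
  show ?thesis
  proof (rule is_sqmsI, goal_cases)
    case (3 u v)
    then show ?case using sqms_dist_eq_0_iff[OF X] inv by auto
  next
    case (7 i r s)
    then show ?case
      using inv sqms_map_in_carrier[OF X] vertical_edge_in_M0 sqms_vertical_edge[OF X] by simp
  next
    case (8 i r s)
    then show ?case
      using inv sqms_map_in_carrier[OF X] horizontal_edge_in_M0 sqms_horizontal_edge[OF X] by simp
  qed (use inv sqms_dist_nonneg[OF X] sqms_dist_le_2[OF X] sqms_dist_commute[OF X] sqms_dist_triangle[OF X]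
      sqms_map_in_carrier[OF X] sqms_dist_map_lower[OF X] in auto)
qed

lemma sq_hom_transport:
  assumes f: "sq_hom Z X f" and e: "inj_on e (sq_carrier X)"
  shows "sq_hom Z (transport e X) (\<lambda>z. e (f z))"
  unfolding sq_hom_def transport_simps using sq_homD[OF f] inv_into_f_f[OF e] by auto

lemma sq_hom_transport_interval_prod:
  assumes f: "sq_hom Z X f" and e: "inj_on e (sq_carrier X \<times> {0..2})"
    and "\<And>z. z \<in> sq_carrier Z \<Longrightarrow> \<psi> z \<in> {0..2}"
    and "\<And>z w. z \<in> sq_carrier Z \<Longrightarrow> w \<in> sq_carrier Z \<Longrightarrow> \<bar>\<psi> z - \<psi> w\<bar> \<le> sq_dist Z z w"
    and "\<And>p. p \<in> M0 \<Longrightarrow> \<psi> (sq_map Z p) = 0"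
  shows "sq_hom Z (transport e (interval_prod X)) (\<lambda>z. e (f z, \<psi> z))"
  using sq_hom_transport[OF sq_hom_interval_prod[OF f assms(3-5)]] e by simp

lemma infinite_UNIV_if_is_sqms:
  assumes X: "is_sqms (X :: 'a sqms)"
  shows "infinite (UNIV :: 'a set)"
proof
  assume "finite (UNIV :: 'a set)"
  then have "finite M0"
    using finite_imageD[OF finite_subset[OF subset_UNIV] sqms_map_inj[OF X]] by blast
  moreover have "Pair 0 ` {0..1} \<subseteq> M0" unfolding M0_def by auto
  ultimately have "finite (Pair (0::real) ` {0..1::real})" by (rule finite_subset[rotated])
  then have "finite {0..1::real}" by (rule finite_imageD) (simp add: inj_on_def)
  then show False by (simp add: infinite_Icc)
qed

text \<open>Square metric spaces are infinite, so \<open>nat \<times> 'a\<close> is large enough to carry a copy of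
  \<open>(nat \<times> 'a) \<times> [0, 2]\<close>.\<close>

lemma interval_encoding_exists:
  assumes X: "is_sqms (X :: 'a sqms)"
  obtains e :: "(nat \<times> 'a) \<times> real \<Rightarrow> nat \<times> 'a" where "inj_on e (UNIV \<times> {0..2})"
proof -
  obtain pair :: "'a \<times> 'a \<Rightarrow> 'a" where pair: "inj pair"
    using card_of_ordIso[THEN iffD2, OF card_of_Times_same_infinite[OF infinite_UNIV_if_is_sqms[OF X]]]
    unfolding bij_betw_def UNIV_Times_UNIV by blast
  define emb where "emb t = sq_map X (0, t / 2)" for t :: real
  have emb: "inj_on emb {0..2}"
  proof (rule inj_onI)
    fix s t :: real assume "s \<in> {0..2}" "t \<in> {0..2}" "emb s = emb t"
    then have "(0::real, s / 2) = (0, t / 2)"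
      using inj_onD[OF sqms_map_inj[OF X]] unfolding emb_def by (force simp: M0_iff)
    then show "s = t" by simp
  qed
  have "inj_on (\<lambda>u. (fst (fst u), pair (snd (fst u), emb (snd u)))) (UNIV \<times> {0..2})"
  proof (rule inj_onI)
    fix u v
    assume u: "u \<in> UNIV \<times> {0..2}" and v: "v \<in> UNIV \<times> {0..2}"
      and eq: "(fst (fst u), pair (snd (fst u), emb (snd u))) = (fst (fst v), pair (snd (fst v), emb (snd v)))"
    then have "snd (fst u) = snd (fst v)" "emb (snd u) = emb (snd v)" using injD[OF pair] by auto
    then show "u = v" using eq inj_onD[OF emb] u v by (auto simp: prod_eq_iff)
  qed
  then show ?thesis by (rule that)
qed

definition dist_to_set :: "'c sqms \<Rightarrow> 'c set \<Rightarrow> 'c \<Rightarrow> real" where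
  "dist_to_set C V y = Inf ((\<lambda>v. sq_dist C y v) ` V)"

context
  fixes C :: "'c sqms" and V :: "'c set"
  assumes C: "is_sqms C" and V: "V \<subseteq> sq_carrier C" "V \<noteq> {}"
begin

lemma dist_to_set_le: "y \<in> sq_carrier C \<Longrightarrow> v \<in> V \<Longrightarrow> dist_to_set C V y \<le> sq_dist C y v"
  unfolding dist_to_set_def using V(1) sqms_dist_nonneg[OF C]
  by (intro cInf_lower) (auto simp: bdd_below_def)

lemma dist_to_set_less: "dist_to_set C V y < \<epsilon> \<Longrightarrow> \<exists>v\<in>V. sq_dist C y v < \<epsilon>"
  unfolding dist_to_set_def using cInf_lessD[of "(\<lambda>v. sq_dist C y v) ` V" \<epsilon>] V(2) by blast

lemma dist_to_set_nonneg: "y \<in> sq_carrier C \<Longrightarrow> 0 \<le> dist_to_set C V y"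
  unfolding dist_to_set_def using V sqms_dist_nonneg[OF C] by (intro cInf_greatest) auto

lemma dist_to_set_le_2: "y \<in> sq_carrier C \<Longrightarrow> dist_to_set C V y \<le> 2"
proof -
  assume y: "y \<in> sq_carrier C"
  obtain v where "v \<in> V" using V(2) by blast
  then show ?thesis using dist_to_set_le[OF y] sqms_dist_le_2[OF C y] V(1) by force
qed

lemma dist_to_set_eq_0: "v \<in> V \<Longrightarrow> dist_to_set C V v = 0"
  using dist_to_set_le[of v v] dist_to_set_nonneg[of v] V(1) sqms_dist_self[OF C, of v] by force

lemma dist_to_set_lipschitz:
  assumes y: "y \<in> sq_carrier C" and y': "y' \<in> sq_carrier C"
  shows "\<bar>dist_to_set C V y - dist_to_set C V y'\<bar> \<le> sq_dist C y y'"
proof -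
  have half: "dist_to_set C V y - sq_dist C y y' \<le> dist_to_set C V y'"
    if y: "y \<in> sq_carrier C" and y': "y' \<in> sq_carrier C" for y y'
    unfolding dist_to_set_def[of C V y']
  proof (rule cInf_greatest)
    fix r assume "r \<in> (\<lambda>v. sq_dist C y' v) ` V"
    then obtain v where v: "v \<in> V" and r: "r = sq_dist C y' v" by blast
    show "dist_to_set C V y - sq_dist C y y' \<le> r"
      using dist_to_set_le[OF y v] sqms_dist_triangle[OF C y y'] v V(1) r by fastforce
  qed (use V in auto)
  then have "dist_to_set C V y - dist_to_set C V y' \<le> sq_dist C y y'"
    "dist_to_set C V y' - dist_to_set C V y \<le> sq_dist C y y'"
    using half[OF y y'] half[OF y' y] sqms_dist_commute[OF C y y'] by linarith+
  then show ?thesis by (simp add: abs_le_iff)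
qed

end

lemma (in sqms_chain) sq_cocone_transport_interval_prod:
  assumes e: "inj_on e (sq_carrier (chain_colim A a) \<times> {0..2})"
  shows "sq_cocone A a (transport e (interval_prod (chain_colim A a))) (\<lambda>k x. e (chain_rep A a (k, x), 0))"
  unfolding sq_cocone_def
proof (intro conjI allI impI ballI)
  show "is_sqms (transport e (interval_prod (chain_colim A a)))"
    using e by (intro is_sqms_transport is_sqms_interval_prod is_sqms_chain_colim) simp
next
  fix k
  show "sq_hom (A k) (transport e (interval_prod (chain_colim A a))) (\<lambda>x. e (chain_rep A a (k, x), 0))"
    using sq_cocone_chain_colim sqms_dist_nonneg[OF is_sqms_stage] e unfolding sq_cocone_def
    by (intro sq_hom_transport_interval_prod[where \<psi> = "\<lambda>_. 0"]) auto
qed (use sq_cocone_chain_colim in \<open>auto simp: sq_cocone_def\<close>)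

section \<open>The colimit \<open>C\<close>\<close>

definition cocone_image :: "(nat \<Rightarrow> 'a sqms) \<Rightarrow> (nat \<Rightarrow> 'a \<Rightarrow> 'c) \<Rightarrow> 'c set" where
  "cocone_image A c = {c k x | k x. x \<in> sq_carrier (A k)}"

text \<open>Only the universal property for vertices of type \<open>nat \<times> 'a\<close> is needed: it allows comparing
  \<open>C\<close> with the explicit colimit \<open>chain_colim A a\<close> and with spaces encoded into that type.\<close>

locale sqms_chain_colimit = sqms_chain A a for A :: "nat \<Rightarrow> 'a sqms" and a +
  fixes C :: "'c sqms" and c :: "nat \<Rightarrow> 'a \<Rightarrow> 'c"
  assumes colimit: "sq_colimit TYPE(nat \<times> 'a) A a C c"
begin

lemma sq_cocone_colimit: "sq_cocone A a C c"
  using colimit unfolding sq_colimit_def by blast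

lemma is_sqms_colimit: "is_sqms C"
  using sq_cocone_colimit unfolding sq_cocone_def by blast

lemma sq_hom_injection: "sq_hom (A k) C (c k)"
  using sq_cocone_colimit unfolding sq_cocone_def by blast

lemma injection_connecting: "k \<le> l \<Longrightarrow> x \<in> sq_carrier (A k) \<Longrightarrow> c l (a k l x) = c k x"
  using sq_cocone_colimit unfolding sq_cocone_def by blast

lemma injection_in: "x \<in> sq_carrier (A k) \<Longrightarrow> c k x \<in> sq_carrier C"
  using sq_homD(1)[OF sq_hom_injection] .

lemma injection_map: "p \<in> M0 \<Longrightarrow> c k (sq_map (A k) p) = sq_map C p"
  using sq_homD(3)[OF sq_hom_injection] .

lemma colimit_lift:
  "sq_cocone A a (D :: (nat \<times> 'a) sqms) g \<Longrightarrow> \<exists>h. sq_hom C D h \<and> (\<forall>k. \<forall>x\<in>sq_carrier (A k). h (c k x) = g k x)"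
  using colimit unfolding sq_colimit_def by blast

lemma colimit_lift_unique:
  "sq_cocone A a (D :: (nat \<times> 'a) sqms) g \<Longrightarrow>
    sq_hom C D h \<Longrightarrow> (\<forall>k. \<forall>x\<in>sq_carrier (A k). h (c k x) = g k x) \<Longrightarrow>
    sq_hom C D h' \<Longrightarrow> (\<forall>k. \<forall>x\<in>sq_carrier (A k). h' (c k x) = g k x) \<Longrightarrow>
    y \<in> sq_carrier C \<Longrightarrow> h y = h' y"
  using colimit unfolding sq_colimit_def by blast

definition comparison :: "'c \<Rightarrow> nat \<times> 'a" where
  "comparison = (SOME h. sq_hom C (chain_colim A a) h \<and> (\<forall>k. \<forall>x\<in>sq_carrier (A k). h (c k x) = chain_rep A a (k, x)))"

lemma sq_hom_comparison: "sq_hom C (chain_colim A a) comparison"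
  and comparison_injection: "x \<in> sq_carrier (A k) \<Longrightarrow> comparison (c k x) = chain_rep A a (k, x)"
  using someI_ex[OF colimit_lift[OF sq_cocone_chain_colim]] unfolding comparison_def by blast+

lemma colimit_dist:
  assumes x: "x \<in> sq_carrier (A k)" and y: "y \<in> sq_carrier (A l)"
  shows "sq_dist C (c k x) (c l y) = chain_dist A a (k, x) (l, y)"
proof (rule antisym)
  show "sq_dist C (c k x) (c l y) \<le> chain_dist A a (k, x) (l, y)"
  proof (rule chain_dist_ge)
    fix j assume "fst (k, x) \<le> j" "fst (l, y) \<le> j"
    then show "sq_dist C (c k x) (c l y) \<le> dist_at A a j (k, x) (l, y)"
      using injection_connecting x y sq_homD(2)[OF sq_hom_injection connecting_in connecting_in]
      unfolding dist_at_def by force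
  qed
  have "chain_dist A a (k, x) (l, y) = sq_dist (chain_colim A a) (comparison (c k x)) (comparison (c l y))"
    using chain_dist_rep x y comparison_injection by simp
  also have "\<dots> \<le> sq_dist C (c k x) (c l y)"
    by (rule sq_homD(2)[OF sq_hom_comparison injection_in[OF x] injection_in[OF y]])
  finally show "chain_dist A a (k, x) (l, y) \<le> sq_dist C (c k x) (c l y)" .
qed

lemma colimit_dist_approx:
  assumes x: "x \<in> sq_carrier (A k)" and y: "y \<in> sq_carrier (A l)" and "0 < \<epsilon>"
  obtains j where "k \<le> j" "l \<le> j" "sq_dist (A j) (a k j x) (a l j y) < sq_dist C (c k x) (c l y) + \<epsilon>"
  using chain_dist_approx[of \<epsilon> "(k, x)" "(l, y)"] assms colimit_dist[OF x y] unfolding dist_at_def by auto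

lemma cocone_image_subset: "cocone_image A c \<subseteq> sq_carrier C"
  unfolding cocone_image_def using injection_in by blast

lemma cocone_image_nonempty: "cocone_image A c \<noteq> {}"
  unfolding cocone_image_def using sqms_map_in_carrier[OF is_sqms_stage zero_in_M0] by blast

lemma map_in_cocone_image: "p \<in> M0 \<Longrightarrow> sq_map C p \<in> cocone_image A c"
  unfolding cocone_image_def using injection_map[of p 0] sqms_map_in_carrier[OF is_sqms_stage, of p 0] by force

text \<open>Two morphisms from \<open>C\<close> into \<open>chain_colim A a \<times> [0, 2]\<close> (encoded into \<open>nat \<times> 'a\<close>) that agree
  on the cocone, one with height 0 and one with height the distance to the image of the cocone;
  uniqueness of the factorisation forces that distance to vanish.\<close>

lemma colimit_dist_to_image_eq_0:
  assumes y: "y \<in> sq_carrier C"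
  shows "dist_to_set C (cocone_image A c) y = 0"
proof -
  let ?dist = "dist_to_set C (cocone_image A c)"
  note image = is_sqms_colimit cocone_image_subset cocone_image_nonempty
  obtain e :: "(nat \<times> 'a) \<times> real \<Rightarrow> nat \<times> 'a" where e: "inj_on e (UNIV \<times> {0..2})"
    using interval_encoding_exists[OF is_sqms_stage] .
  then have e': "inj_on e (sq_carrier (chain_colim A a) \<times> {0..2})" by (rule inj_on_subset) auto
  have "sq_hom C (transport e (interval_prod (chain_colim A a))) (\<lambda>y. e (comparison y, 0))"
    using sqms_dist_nonneg[OF is_sqms_colimit]
    by (intro sq_hom_transport_interval_prod[OF sq_hom_comparison e', where \<psi> = "\<lambda>_. 0"]) auto
  moreover have "sq_hom C (transport e (interval_prod (chain_colim A a))) (\<lambda>y. e (comparison y, ?dist y))"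
  proof (rule sq_hom_transport_interval_prod[OF sq_hom_comparison e'])
    fix z w assume z: "z \<in> sq_carrier C" and w: "w \<in> sq_carrier C"
    show "?dist z \<in> {0..2}" using dist_to_set_nonneg[OF image z] dist_to_set_le_2[OF image z] by simp
    show "\<bar>?dist z - ?dist w\<bar> \<le> sq_dist C z w" by (rule dist_to_set_lipschitz[OF image z w])
  next
    fix p assume "p \<in> M0"
    then show "?dist (sq_map C p) = 0" by (intro dist_to_set_eq_0[OF image] map_in_cocone_image)
  qed
  moreover have "?dist (c k x) = 0" if "x \<in> sq_carrier (A k)" for k x
    using that by (intro dist_to_set_eq_0[OF image]) (auto simp: cocone_image_def)
  ultimately have "e (comparison y, 0) = e (comparison y, ?dist y)"
    using colimit_lift_unique[OF sq_cocone_transport_interval_prod[OF e'], of "\<lambda>y. e (comparison y, 0)"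
        "\<lambda>y. e (comparison y, ?dist y)" y] comparison_injection y
    by simp
  then show ?thesis
    using inj_onD[OF e, of "(comparison y, 0)" "(comparison y, ?dist y)"]
      dist_to_set_nonneg[OF image y] dist_to_set_le_2[OF image y] by simp
qed

text \<open>Since \<open>comparison\<close> is short and \<open>comparison \<circ> c\<^sub>k\<close> is the canonical cocone,
  \<open>d(v, c\<^sub>j x\<^sub>0) \<le> d(v, y)\<close> for every \<open>v\<close> in the image, where \<open>c\<^sub>j x\<^sub>0\<close> and \<open>y\<close> have
  the same comparison image.\<close>

theorem colimit_covered:
  assumes y: "y \<in> sq_carrier C"
  obtains k x where "x \<in> sq_carrier (A k)" "y = c k x"
proof -
  obtain j x0 where x0: "x0 \<in> sq_carrier (A j)" and hy: "comparison y = chain_rep A a (j, x0)"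
    using sq_homD(1)[OF sq_hom_comparison y] by (auto simp: chain_union_def)
  have "sq_dist C y (c j x0) \<le> 2 * \<epsilon>" if "0 < \<epsilon>" for \<epsilon>
  proof -
    have "dist_to_set C (cocone_image A c) y < \<epsilon>" using colimit_dist_to_image_eq_0[OF y] that by simp
    then obtain v where v: "v \<in> cocone_image A c" and dv: "sq_dist C y v < \<epsilon>"
      using dist_to_set_less[OF is_sqms_colimit cocone_image_subset cocone_image_nonempty] by blast
    then obtain k x where x: "x \<in> sq_carrier (A k)" and vx: "v = c k x" unfolding cocone_image_def by blast
    have "sq_dist C v (c j x0) = chain_dist A a (chain_rep A a (k, x)) (chain_rep A a (j, x0))"
      using colimit_dist[OF x x0] chain_dist_rep x x0 vx by simp
    also have "\<dots> = sq_dist (chain_colim A a) (comparison v) (comparison y)"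
      using hy comparison_injection x vx by simp
    also have "\<dots> \<le> sq_dist C v y" using sq_homD(2)[OF sq_hom_comparison injection_in[OF x] y] vx by simp
    finally show ?thesis
      using sqms_dist_triangle[OF is_sqms_colimit y injection_in[OF x] injection_in[OF x0]]
        sqms_dist_commute[OF is_sqms_colimit y injection_in[OF x]] dv vx by simp
  qed
  then have "sq_dist C y (c j x0) \<le> 0" using field_le_epsilon[of "sq_dist C y (c j x0) / 2" 0] by fastforce
  then show ?thesis using that x0 sqms_eq_if_dist_le_0[OF is_sqms_colimit y injection_in[OF x0]] by blast
qed

end

section \<open>The colimit of \<open>M \<otimes> A\<^sub>k\<close>\<close>

lemma (in sqms_chain) tens_map_connecting_pt:
  "k \<le> l \<Longrightarrow> (m, x) \<in> Mset \<times> sq_carrier (A k) \<Longrightarrow>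
    tens_map (A k) (A l) (a k l) (tens_pt (A k) m x) = tens_pt (A l) m (a k l x)"
  by (rule tens_map_pt) (use connecting_map in auto)

lemma (in sqms_chain) sq_chain_tens: "sq_chain (\<lambda>k. tens (A k)) (\<lambda>k l. tens_map (A k) (A l) (a k l))"
  unfolding sq_chain_def tens_simps
proof (intro conjI allI impI ballI)
  fix k l :: nat assume "k \<le> l"
  then show "sq_hom (tens (A k)) (tens (A l)) (tens_map (A k) (A l) (a k l))"
    by (intro sq_hom_tens_map is_sqms_stage sq_hom_connecting)
next
  fix k P assume "P \<in> tens_carrier (A k)"
  then obtain m x where P: "P = tens_pt (A k) m x" and mx: "(m, x) \<in> Mset \<times> sq_carrier (A k)"
    by (rule tens_carrierE)
  show "tens_map (A k) (A k) (a k k) P = P"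
    unfolding P tens_map_connecting_pt[OF order_refl mx] using connecting_id mx by simp
next
  fix k l m P assume kl: "k \<le> l" and lm: "l \<le> m" and "P \<in> tens_carrier (A k)"
  then obtain n x where P: "P = tens_pt (A k) n x" and nx: "(n, x) \<in> Mset \<times> sq_carrier (A k)"
    by (auto elim: tens_carrierE)
  have nx': "(n, a k l x) \<in> Mset \<times> sq_carrier (A l)" using nx connecting_in[OF kl] by auto
  show "tens_map (A l) (A m) (a l m) (tens_map (A k) (A l) (a k l) P) = tens_map (A k) (A m) (a k m) P"
    unfolding P tens_map_connecting_pt[OF kl nx] tens_map_connecting_pt[OF order_trans[OF kl lm] nx]
      tens_map_connecting_pt[OF lm nx'] using connecting_comp[OF kl lm] nx by simp
qed (rule is_sqms_tens[OF is_sqms_stage])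

context sqms_chain_colimit
begin

lemma tens_map_injection_pt:
  "(m, x) \<in> Mset \<times> sq_carrier (A k) \<Longrightarrow> tens_map (A k) C (c k) (tens_pt (A k) m x) = tens_pt C m (c k x)"
  by (rule tens_map_pt) (use injection_map in auto)

lemma sq_cocone_tens:
  "sq_cocone (\<lambda>k. tens (A k)) (\<lambda>k l. tens_map (A k) (A l) (a k l)) (tens C) (\<lambda>k. tens_map (A k) C (c k))"
  unfolding sq_cocone_def tens_simps
proof (intro conjI allI impI ballI)
  fix k show "sq_hom (tens (A k)) (tens C) (tens_map (A k) C (c k))"
    by (rule sq_hom_tens_map[OF is_sqms_stage is_sqms_colimit sq_hom_injection])
next
  fix k l P assume kl: "k \<le> l" and "P \<in> tens_carrier (A k)"
  then obtain n x where P: "P = tens_pt (A k) n x" and nx: "(n, x) \<in> Mset \<times> sq_carrier (A k)"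
    by (auto elim: tens_carrierE)
  have nx': "(n, a k l x) \<in> Mset \<times> sq_carrier (A l)" using nx connecting_in[OF kl] by auto
  show "tens_map (A l) C (c l) (tens_map (A k) (A l) (a k l) P) = tens_map (A k) C (c k) P"
    unfolding P tens_map_connecting_pt[OF kl nx] tens_map_injection_pt[OF nx] tens_map_injection_pt[OF nx']
    using injection_connecting[OF kl] nx by simp
qed (rule is_sqms_tens[OF is_sqms_colimit])

end

locale tens_cocone = sqms_chain_colimit A a C c
  for A :: "nat \<Rightarrow> 'a sqms" and a and C :: "'c sqms" and c +
  fixes D :: "'d sqms" and g :: "nat \<Rightarrow> ((nat \<times> nat) \<times> 'a) set \<Rightarrow> 'd"
  assumes cocone: "sq_cocone (\<lambda>k. tens (A k)) (\<lambda>k l. tens_map (A k) (A l) (a k l)) D g"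
begin

lemma is_sqms_vertex: "is_sqms D"
  using cocone unfolding sq_cocone_def by blast

lemma sq_hom_leg: "sq_hom (tens (A k)) D (g k)"
  using cocone unfolding sq_cocone_def by blast

lemma leg_in: "(m, x) \<in> Mset \<times> sq_carrier (A k) \<Longrightarrow> g k (tens_pt (A k) m x) \<in> sq_carrier D"
  using sq_homD(1)[OF sq_hom_leg] tens_carrierI by (metis tens_simps(1))

lemma leg_connecting:
  assumes "k \<le> j" and mx: "(m, x) \<in> Mset \<times> sq_carrier (A k)"
  shows "g k (tens_pt (A k) m x) = g j (tens_pt (A j) m (a k j x))"
proof -
  have "g j (tens_map (A k) (A j) (a k j) (tens_pt (A k) m x)) = g k (tens_pt (A k) m x)"
    using cocone \<open>k \<le> j\<close> tens_carrierI[OF mx] unfolding sq_cocone_def tens_simps by blast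
  then show ?thesis using tens_map_connecting_pt[OF \<open>k \<le> j\<close> mx] by simp
qed

text \<open>The legs only see \<open>C\<close> through its metric: pushed far enough along the chain, two points of one
  piece are as close as their images in \<open>C\<close>, and \<open>g\<^sub>j\<close> is short on that piece.\<close>

lemma leg_dist_le:
  assumes m: "m \<in> Mset" and x: "x \<in> sq_carrier (A k)" and x': "x' \<in> sq_carrier (A l)"
  shows "sq_dist D (g k (tens_pt (A k) m x)) (g l (tens_pt (A l) m x')) \<le> sq_dist C (c k x) (c l x') / 3"
proof (rule field_le_epsilon)
  fix \<epsilon> :: real assume "0 < \<epsilon>"
  then obtain j where j: "k \<le> j" "l \<le> j"
    and close: "sq_dist (A j) (a k j x) (a l j x') < sq_dist C (c k x) (c l x') + 3 * \<epsilon>"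
    using colimit_dist_approx[OF x x', of "3 * \<epsilon>"] by auto
  have ax: "(m, a k j x) \<in> Mset \<times> sq_carrier (A j)" and ax': "(m, a l j x') \<in> Mset \<times> sq_carrier (A j)"
    using m connecting_in[OF j(1) x] connecting_in[OF j(2) x'] by auto
  have "sq_dist D (g k (tens_pt (A k) m x)) (g l (tens_pt (A l) m x'))
      = sq_dist D (g j (tens_pt (A j) m (a k j x))) (g j (tens_pt (A j) m (a l j x')))"
    using leg_connecting[OF j(1)] leg_connecting[OF j(2)] m x x' by simp
  also have "\<dots> \<le> tens_dist (A j) (tens_pt (A j) m (a k j x)) (tens_pt (A j) m (a l j x'))"
    using sq_homD(2)[OF sq_hom_leg[of j], of "tens_pt (A j) m (a k j x)" "tens_pt (A j) m (a l j x')"]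
      tens_carrierI[OF ax] tens_carrierI[OF ax'] by simp
  also have "\<dots> \<le> tens_cost (A j) (m, a k j x) (m, a l j x')"
    by (rule tens_dist_le_cost[OF is_sqms_stage ax ax'])
  also have "\<dots> \<le> sq_dist (A j) (a k j x) (a l j x') / 3"
    using tens_cost_same_cell[OF is_sqms_stage[of j], of "(m, a k j x)" "(m, a l j x')"] ax ax' by simp
  finally show "sq_dist D (g k (tens_pt (A k) m x)) (g l (tens_pt (A l) m x')) \<le> sq_dist C (c k x) (c l x') / 3 + \<epsilon>"
    using close by simp
qed

lemma leg_eq_if_same_image:
  assumes m: "m \<in> Mset" and x: "x \<in> sq_carrier (A k)" and x': "x' \<in> sq_carrier (A l)" and "c k x = c l x'"
  shows "g k (tens_pt (A k) m x) = g l (tens_pt (A l) m x')"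
  using leg_dist_le[OF m x x'] \<open>c k x = c l x'\<close> sqms_dist_self[OF is_sqms_colimit injection_in[OF x']]
    leg_in m x x' by (intro sqms_eq_if_dist_le_0[OF is_sqms_vertex]) auto

definition preimage :: "'c \<Rightarrow> nat \<times> 'a" where
  "preimage y = (SOME z. snd z \<in> sq_carrier (A (fst z)) \<and> y = c (fst z) (snd z))"

lemma preimage:
  assumes "y \<in> sq_carrier C"
  shows "snd (preimage y) \<in> sq_carrier (A (fst (preimage y))) \<and> y = c (fst (preimage y)) (snd (preimage y))"
proof -
  obtain k x where "x \<in> sq_carrier (A k)" "y = c k x" using colimit_covered[OF assms] .
  then have "\<exists>z. snd z \<in> sq_carrier (A (fst z)) \<and> y = c (fst z) (snd z)" by (intro exI[of _ "(k, x)"]) simp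
  then show ?thesis unfolding preimage_def by (rule someI_ex)
qed

definition lift_rep :: "(nat \<times> nat) \<times> 'c \<Rightarrow> 'd" where
  "lift_rep z = g (fst (preimage (snd z))) (tens_pt (A (fst (preimage (snd z)))) (fst z) (snd (preimage (snd z))))"

lemma lift_rep_in: "z \<in> Mset \<times> sq_carrier C \<Longrightarrow> lift_rep z \<in> sq_carrier D"
  using preimage[of "snd z"] unfolding lift_rep_def by (intro leg_in) auto

lemma lift_rep_injection:
  assumes m: "m \<in> Mset" and x: "x \<in> sq_carrier (A k)"
  shows "lift_rep (m, c k x) = g k (tens_pt (A k) m x)"
proof -
  let ?z = "preimage (c k x)"
  have "snd ?z \<in> sq_carrier (A (fst ?z))" "c (fst ?z) (snd ?z) = c k x"
    using preimage[OF injection_in[OF x]] by auto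
  then show ?thesis unfolding lift_rep_def using leg_eq_if_same_image[OF m _ x] by simp
qed

lemma lift_rep_map:
  "m \<in> Mset \<Longrightarrow> p \<in> M0 \<Longrightarrow> lift_rep (m, sq_map C p) = g 0 (tens_pt (A 0) m (sq_map (A 0) p))"
  using lift_rep_injection[OF _ sqms_map_in_carrier[OF is_sqms_stage], of m p 0] injection_map by simp

lemma lift_rep_step:
  assumes z: "z \<in> Mset \<times> sq_carrier C" and w: "w \<in> Mset \<times> sq_carrier C"
  shows "sq_dist D (lift_rep z) (lift_rep w) \<le> tens_cost C z w"
proof (cases "(z, w) \<in> tens_rel C")
  case True
  have "lift_rep z = lift_rep w"
    using is_sqms_colimit True
  proof (cases rule: tens_rel_cases)
    case (glued p q)
    then have "tens_pt (A 0) (fst z) (sq_map (A 0) p) = tens_pt (A 0) (fst w) (sq_map (A 0) q)"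
      by (intro tens_pt_eqI tens_rel_if_same_pos)
    then show ?thesis using lift_rep_map[of "fst z" p] lift_rep_map[of "fst w" q] glued by (metis prod.collapse)
  qed simp
  then show ?thesis using sqms_dist_self[OF is_sqms_vertex lift_rep_in[OF w]] tens_cost_rel[OF True] by simp
next
  case unrelated: False
  show ?thesis
  proof (cases "fst z = fst w")
    case True
    obtain m y y' where zw: "z = (m, y)" "w = (m, y')" using True by (cases z, cases w) auto
    have y: "y \<in> sq_carrier C" and y': "y' \<in> sq_carrier C" and m: "m \<in> Mset" using z w zw by auto
    have "sq_dist D (lift_rep z) (lift_rep w) \<le> sq_dist C y y' / 3"
      unfolding lift_rep_def zw using leg_dist_le[OF m conjunct1[OF preimage[OF y]] conjunct1[OF preimage[OF y']]]
        preimage[OF y] preimage[OF y'] by simp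
    also have "\<dots> = tens_cost C z w" using unrelated zw unfolding tens_cost_def by simp
    finally show ?thesis .
  next
    case False
    then have "tens_cost C z w = 2" using unrelated unfolding tens_cost_def by simp
    then show ?thesis using sqms_dist_le_2[OF is_sqms_vertex lift_rep_in[OF z] lift_rep_in[OF w]] by simp
  qed
qed

definition lift :: "((nat \<times> nat) \<times> 'c) set \<Rightarrow> 'd" where
  "lift P = lift_rep (SOME z. z \<in> P \<and> z \<in> Mset \<times> sq_carrier C)"

lemma lift_pt:
  assumes my: "(m, y) \<in> Mset \<times> sq_carrier C"
  shows "lift (tens_pt C m y) = lift_rep (m, y)"
proof -
  let ?z = "SOME z. z \<in> tens_pt C m y \<and> z \<in> Mset \<times> sq_carrier C"
  have z: "?z \<in> tens_pt C m y \<and> ?z \<in> Mset \<times> sq_carrier C"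
    by (rule someI[of _ "(m, y)"]) (use my tens_pt_self[of m y C] in auto)
  then have "(?z, (m, y)) \<in> tens_rel C" by (simp add: mem_tens_pt tens_rel_sym)
  then have "sq_dist D (lift_rep ?z) (lift_rep (m, y)) \<le> 0"
    using lift_rep_step[OF conjunct2[OF z] my] by (simp add: tens_cost_rel)
  then have "lift_rep ?z = lift_rep (m, y)"
    by (rule sqms_eq_if_dist_le_0[OF is_sqms_vertex lift_rep_in[OF conjunct2[OF z]] lift_rep_in[OF my]])
  then show ?thesis unfolding lift_def .
qed

lemma sq_hom_lift: "sq_hom (tens C) D lift"
  unfolding sq_hom_def tens_simps
proof (intro conjI ballI subsetI)
  fix Q assume "Q \<in> lift ` tens_carrier C"
  then show "Q \<in> sq_carrier D" using lift_pt lift_rep_in by (auto elim!: tens_carrierE)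
next
  fix P Q assume "P \<in> tens_carrier C" "Q \<in> tens_carrier C"
  then show "sq_dist D (lift P) (lift Q) \<le> tens_dist C P Q"
    using tens_dist_lower_bound[where \<delta> = "sq_dist D" and F = lift_rep, OF lift_rep_step
        sqms_dist_triangle[OF is_sqms_vertex lift_rep_in lift_rep_in lift_rep_in]]
    by (auto elim!: tens_carrierE simp: lift_pt)
next
  fix p assume p: "p \<in> M0"
  have "lift (tens_sq C p) = lift_rep (chosen_cell p, sq_map C (cell_coord (chosen_cell p) p))"
    unfolding tens_sq_eq[of C] by (rule lift_pt[OF chosen_cell_coord_in[OF is_sqms_colimit p]])
  also have "\<dots> = g 0 (tens_sq (A 0) p)"
    using lift_rep_map in_cell_Mset[OF in_chosen_cell[OF p]] cell_coord_in_M0[OF p in_chosen_cell[OF p]]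
    by (simp add: tens_sq_eq)
  also have "\<dots> = sq_map D p" using sq_homD(3)[OF sq_hom_leg p] by simp
  finally show "lift (tens_sq C p) = sq_map D p" .
qed

lemma lift_injection: "P \<in> tens_carrier (A k) \<Longrightarrow> lift (tens_map (A k) C (c k) P) = g k P"
  using tens_map_injection_pt lift_pt lift_rep_injection injection_in by (auto elim!: tens_carrierE)

lemma lift_unique:
  assumes "sq_hom (tens C) D h" and h: "\<forall>k. \<forall>P\<in>sq_carrier (tens (A k)). h (tens_map (A k) C (c k) P) = g k P"
    and Y: "Y \<in> sq_carrier (tens C)"
  shows "h Y = lift Y"
proof -
  obtain m y where Y': "Y = tens_pt C m y" "(m, y) \<in> Mset \<times> sq_carrier C" using Y by (auto elim: tens_carrierE)
  obtain k x where x: "x \<in> sq_carrier (A k)" and y: "y = c k x" using colimit_covered Y'(2) by blast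
  have mx: "(m, x) \<in> Mset \<times> sq_carrier (A k)" using Y'(2) x by auto
  then have "Y = tens_map (A k) C (c k) (tens_pt (A k) m x)" unfolding Y' y by (simp add: tens_map_injection_pt)
  then show ?thesis using h lift_injection tens_carrierI[OF mx] by simp
qed

end

lemma (in sqms_chain_colimit) sq_colimit_tens:
  "sq_colimit TYPE('d) (\<lambda>k. tens (A k)) (\<lambda>k l. tens_map (A k) (A l) (a k l)) (tens C) (\<lambda>k. tens_map (A k) C (c k))"
  unfolding sq_colimit_def
proof (intro conjI sq_cocone_tens allI impI, goal_cases)
  case (1 D g)
  then interpret tens_cocone A a C c D g by unfold_locales
  show ?case using sq_hom_lift lift_injection by (intro exI[of _ lift]) simp
next
  case (2 D g h h')
  then interpret tens_cocone A a C c D g by unfold_locales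
  show ?case using 2 lift_unique[of h] lift_unique[of h'] by simp
qed

theorem mainTheorem15:
  fixes A :: "nat \<Rightarrow> 'a sqms" and a :: "nat \<Rightarrow> nat \<Rightarrow> 'a \<Rightarrow> 'a"
    and C :: "'c sqms" and c :: "nat \<Rightarrow> 'a \<Rightarrow> 'c"
  assumes "sq_chain A a"
    and "sq_colimit TYPE('d) A a C c"
    and "sq_colimit TYPE(nat \<times> 'a) A a C c"
  shows "sq_chain (\<lambda>k. tens (A k)) (\<lambda>k l. tens_map (A k) (A l) (a k l))
       \<and> sq_colimit TYPE('d) (\<lambda>k. tens (A k)) (\<lambda>k l. tens_map (A k) (A l) (a k l))
           (tens C) (\<lambda>k. tens_map (A k) C (c k))"
proof -
  interpret sqms_chain_colimit A a C c
    using assms(1,3) by (simp add: sqms_chain_colimit_def sqms_chain_def sqms_chain_colimit_axioms_def)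
  show ?thesis using sq_chain_tens sq_colimit_tens by blast
qed

end
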